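(* Let $\gamma>\frac d2$, $T>0$, $0<\tau\le1$, $n\ge0$ with $t_{n+1}\le T$ where $t_n=n\tau$. Let $u$ solve $i\partial_tu+\Delta u+|u|^2u=0$ on $[0,T]\times\mathbb T^d$, let $v(t)=\mathrm e^{-it\Delta}u(t)$, and assume $v\in L^\infty((0,T);H^{\gamma+2}(\mathbb T^d))$. Define $$I_1=i\int_0^\tau\mathrm e^{-i(t_n+s)\Delta}\Big(\big|\mathrm e^{i(t_n+s)\Delta}v(t_n)\big|^2\mathrm e^{i(t_n+s)\Delta}v(t_n)\Big)ds,$$ $$I_2=-\int_0^\tau s\,\mathrm e^{-i(t_n+s)\Delta}\Big(\big|\mathrm e^{i(t_n+s)\Delta}v(t_n)\big|^4\mathrm e^{i(t_n+s)\Delta}v(t_n)\Big)ds,$$ and $\mathcal R_4^n(v)=v(t_{n+1})-v(t_n)-I_1-I_2$. Then $\|\mathcal R_4^n(v)\|_{H^\gamma}\le C\tau^3$, where $C$ depends only on $\|v\|_{L^\infty((0,T);H^{\gamma+2})}$.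
   Context: $\mathbb T=(0,2\pi)$ periodic. $\mathrm e^{it\Delta}$ is the Fourier multiplier multiplying the $\boldsymbol\xi$-th Fourier coefficient by $\mathrm e^{-it|\boldsymbol\xi|^2}$. $\|f\|_{H^s}=\|(1-\Delta)^{s/2}f\|_{L^2}$. *)

theory Defs
  imports "HOL-Analysis.Analysis"
begin

text \<open>Functions on the torus (0,2pi)^d are represented by their Fourier coefficients:
  f(x) = sum over xi in Z^d of f xi * e^(i xi.x). The dimension d is the finite index type 'd.\<close>

type_synonym 'd fcoef = "int^'d \<Rightarrow> complex"

definition sqn :: "int^'d \<Rightarrow> real" where
  "sqn \<xi> = (\<Sum>i\<in>UNIV. (real_of_int (\<xi> $ i))^2)"

text \<open>Schroedinger group e^(it Delta): multiplies the xi-th coefficient by e^(-it|xi|^2).\<close>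
definition schr :: "real \<Rightarrow> ('d::finite) fcoef \<Rightarrow> 'd fcoef" where
  "schr t f = (\<lambda>\<xi>. cis (- t * sqn \<xi>) * f \<xi>)"

text \<open>Fourier coefficients of a product (convolution) and of the complex conjugate.\<close>
definition conv :: "('d::finite) fcoef \<Rightarrow> 'd fcoef \<Rightarrow> 'd fcoef" where
  "conv f g = (\<lambda>\<xi>. \<Sum>\<^sub>\<infinity>\<eta>. f \<eta> * g (\<xi> - \<eta>))"

definition cconj :: "('d::finite) fcoef \<Rightarrow> 'd fcoef" where
  "cconj f = (\<lambda>\<xi>. cnj (f (- \<xi>)))"

definition cubic :: "('d::finite) fcoef \<Rightarrow> 'd fcoef" where
  "cubic f = conv (conv f (cconj f)) f"

definition quintic :: "('d::finite) fcoef \<Rightarrow> 'd fcoef" where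
  "quintic f = conv (conv (conv (conv f (cconj f)) f) (cconj f)) f"

text \<open>Sobolev space H^s(T^d) and its norm ||(1-Delta)^(s/2) f||_{L^2((0,2pi)^d)} (Parseval).\<close>
definition in_H :: "real \<Rightarrow> ('d::finite) fcoef \<Rightarrow> bool" where
  "in_H s f \<longleftrightarrow> (\<lambda>\<xi>. (1 + sqn \<xi>) powr s * (cmod (f \<xi>))^2) summable_on UNIV"

definition normH :: "real \<Rightarrow> ('d::finite) fcoef \<Rightarrow> real" where
  "normH s f = (2 * pi) powr (real CARD('d) / 2) *
     sqrt (\<Sum>\<^sub>\<infinity>\<xi>. (1 + sqn \<xi>) powr s * (cmod (f \<xi>))^2)"

text \<open>u solves i u_t + Delta u + |u|^2 u = 0 on [0,T] x T^d: for each t, u(t) has absolutely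
  summable Fourier coefficients (so u(t) is continuous and |u|^2 u is given by convolution),
  each coefficient is differentiable in t on [0,T], and the equation holds coefficientwise.\<close>
definition nls_solution :: "real \<Rightarrow> (real \<Rightarrow> ('d::finite) fcoef) \<Rightarrow> bool" where
  "nls_solution T u \<longleftrightarrow>
     (\<forall>t\<in>{0..T}. (\<lambda>\<xi>. cmod (u t \<xi> :: complex)) summable_on UNIV) \<and>
     (\<forall>\<xi>. \<forall>t\<in>{0..T}. \<exists>D::complex. ((\<lambda>s. u s \<xi>) has_vector_derivative D) (at t within {0..T}) \<and>
         \<i> * D - complex_of_real (sqn \<xi>) * u t \<xi> + cubic (u t) \<xi> = 0)"

definition I1 :: "real \<Rightarrow> nat \<Rightarrow> (real \<Rightarrow> ('d::finite) fcoef) \<Rightarrow> 'd fcoef" where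
  "I1 \<tau> n v = (\<lambda>\<xi>. \<i> * integral {0..\<tau>}
      (\<lambda>s. schr (- (real n * \<tau> + s)) (cubic (schr (real n * \<tau> + s) (v (real n * \<tau>)))) \<xi>))"

definition I2 :: "real \<Rightarrow> nat \<Rightarrow> (real \<Rightarrow> ('d::finite) fcoef) \<Rightarrow> 'd fcoef" where
  "I2 \<tau> n v = (\<lambda>\<xi>. - integral {0..\<tau>}
      (\<lambda>s. complex_of_real s *
         schr (- (real n * \<tau> + s)) (quintic (schr (real n * \<tau> + s) (v (real n * \<tau>)))) \<xi>))"

definition R4 :: "real \<Rightarrow> nat \<Rightarrow> (real \<Rightarrow> ('d::finite) fcoef) \<Rightarrow> 'd fcoef" where
  "R4 \<tau> n v = (\<lambda>\<xi>. v (real (Suc n) * \<tau>) \<xi> - v (real n * \<tau>) \<xi> - I1 \<tau> n v \<xi> - I2 \<tau> n v \<xi>)"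

end

theory Submission
  imports Defs
begin

(* Work with v(t) = e^(-it Delta) u(t), for which v' = i e^(-it Delta) (|u|^2 u). For s > d/2 the
   sum of (1 + |xi|^2)^(-s) over Z^d is finite, so H^s embeds into l^1 and, by Young's inequality and
   <xi>^s <= 2^s (<eta>^s + <xi - eta>^s), H^s is an algebra under convolution of coefficients. Hence
   |.|^2 . and |.|^4 . are locally Lipschitz on H^s, and e^(it Delta) f - f = O(|t| |f|_(H^(s+2))).
   Put A = e^(i sigma Delta) u(t_n). Then u(t_n + sigma) = A + i sigma |A|^2 A + O(sigma^2), and
   the derivative of the remainder at sigma is e^(-i(t_n + sigma) Delta) applied to i times
   |u|^2 u - |A|^2 A minus the derivative of |.|^2 . at A in the direction i sigma |A|^2 A; that
   derivative equals i sigma |A|^4 A, which is what I_2 subtracts. So the derivative of the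
   remainder is O(sigma^2) in H^s, and integrating from 0 to tau gives O(tau^3). The bound on v,
   assumed only almost everywhere, holds at every time because each coefficient of v is continuous
   and the H^(s+2) norm is lower semicontinuous. *)

section \<open>Sobolev norms of Fourier coefficients\<close>

definition weight :: "real \<Rightarrow> int^'d \<Rightarrow> real" where
  "weight s \<xi> = (1 + sqn \<xi>) powr s"

definition hnorm :: "real \<Rightarrow> ('d::finite) fcoef \<Rightarrow> real" where
  "hnorm s f = sqrt (\<Sum>\<^sub>\<infinity>\<xi>. weight s \<xi> * (cmod (f \<xi>))^2)"

lemma sqn_nonneg[simp]: "sqn \<xi> \<ge> 0"
  unfolding sqn_def by (simp add: sum_nonneg)

lemma sqn_uminus[simp]: "sqn (- \<xi>) = sqn \<xi>"
  unfolding sqn_def by simp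

lemma weight_pos[simp]: "weight s \<xi> > 0"
proof -
  have "1 + sqn \<xi> > 0" using sqn_nonneg[of \<xi>] by linarith
  then show ?thesis unfolding weight_def by simp
qed

lemma weight_nonneg[simp]: "weight s \<xi> \<ge> 0"
  using weight_pos[of s \<xi>] by linarith

lemma weight_ge_1: "s \<ge> 0 \<Longrightarrow> weight s \<xi> \<ge> 1"
  unfolding weight_def using sqn_nonneg[of \<xi>] by (simp add: ge_one_powr_ge_zero)

lemma weight_mono: "s \<le> s' \<Longrightarrow> weight s \<xi> \<le> weight s' \<xi>"
  unfolding weight_def using sqn_nonneg[of \<xi>] by (intro powr_mono) auto

lemma weight_add: "weight (s + s') \<xi> = weight s \<xi> * weight s' \<xi>"
  unfolding weight_def using sqn_nonneg[of \<xi>] by (simp add: powr_add)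

lemma in_H_iff_weight: "in_H s f \<longleftrightarrow> (\<lambda>\<xi>. weight s \<xi> * (cmod (f \<xi>))^2) summable_on UNIV"
  unfolding in_H_def weight_def ..

lemma normH_eq_hnorm: "normH s f = (2 * pi) powr (real CARD('d) / 2) * hnorm s (f :: 'd::finite fcoef)"
  unfolding normH_def hnorm_def weight_def ..

lemma hnorm_nonneg[simp]: "hnorm s f \<ge> 0"
  unfolding hnorm_def by (simp add: infsum_nonneg)

lemma sum_weight_eq_L2_set:
  "(\<Sum>\<xi>\<in>F. weight s \<xi> * (cmod (f \<xi>))^2) = (L2_set (\<lambda>\<xi>. sqrt (weight s \<xi>) * cmod (f \<xi>)) F)^2"
  unfolding L2_set_def by (simp add: sum_nonneg power_mult_distrib)

lemma in_H_hnorm_leI: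
  assumes "B \<ge> 0" "\<And>F. finite F \<Longrightarrow> L2_set (\<lambda>\<xi>. sqrt (weight s \<xi>) * cmod (f \<xi>)) F \<le> B"
  shows "in_H s f" "hnorm s f \<le> B"
proof -
  have b: "(\<Sum>\<xi>\<in>F. weight s \<xi> * (cmod (f \<xi>))^2) \<le> B^2" if "finite F" for F
    unfolding sum_weight_eq_L2_set using assms(2)[OF that] by (intro power_mono) auto
  have s: "(\<lambda>\<xi>. weight s \<xi> * (cmod (f \<xi>))^2) summable_on UNIV"
    by (rule nonneg_bdd_above_summable_on) (auto intro!: bdd_aboveI[where M="B^2"] b)
  then show "in_H s f" unfolding in_H_iff_weight .
  have "(\<Sum>\<^sub>\<infinity>\<xi>. weight s \<xi> * (cmod (f \<xi>))^2) \<le> B^2"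
    by (rule infsum_le_finite_sums[OF s]) (use b in auto)
  then have "hnorm s f \<le> sqrt (B^2)" unfolding hnorm_def by (rule real_sqrt_le_mono)
  then show "hnorm s f \<le> B" using assms(1) by simp
qed

lemma L2_set_le_hnorm:
  assumes "in_H s f"
  shows "L2_set (\<lambda>\<xi>. sqrt (weight s \<xi>) * cmod (f \<xi>)) F \<le> hnorm s f"
proof (cases "finite F")
  case True
  have "(\<Sum>\<xi>\<in>F. weight s \<xi> * (cmod (f \<xi>))^2) \<le> (\<Sum>\<^sub>\<infinity>\<xi>. weight s \<xi> * (cmod (f \<xi>))^2)"
    by (rule finite_sum_le_infsum) (use assms True in \<open>auto simp: in_H_iff_weight\<close>)
  then show ?thesis unfolding hnorm_def sum_weight_eq_L2_set by (simp add: real_le_rsqrt)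
qed simp

lemma norm_coef_le_hnorm:
  assumes "s \<ge> 0" "in_H s f"
  shows "cmod (f \<xi>) \<le> hnorm s f"
proof -
  have "cmod (f \<xi>) \<le> sqrt (weight s \<xi>) * cmod (f \<xi>)"
    using weight_ge_1[OF assms(1), of \<xi>] by (simp add: mult_le_cancel_right1)
  also have "\<dots> = L2_set (\<lambda>\<xi>. sqrt (weight s \<xi>) * cmod (f \<xi>)) {\<xi>}"
    by (simp add: L2_set_def)
  also have "\<dots> \<le> hnorm s f" by (rule L2_set_le_hnorm[OF assms(2)])
  finally show ?thesis .
qed

lemma H_dominated2:
  assumes g: "in_H s g" and h: "in_H s h" and ab: "a \<ge> 0" "b \<ge> 0"
    and le: "\<And>\<xi>. cmod (f \<xi>) \<le> a * cmod (g \<xi>) + b * cmod (h \<xi>)"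
  shows "in_H s f" "hnorm s f \<le> a * hnorm s g + b * hnorm s h"
proof -
  let ?w = "\<lambda>f \<xi>. sqrt (weight s \<xi>) * cmod (f \<xi>)"
  have L: "L2_set (?w f) F \<le> a * hnorm s g + b * hnorm s h" for F
  proof -
    have "L2_set (?w f) F \<le> L2_set (\<lambda>\<xi>. a * ?w g \<xi> + b * ?w h \<xi>) F"
    proof (rule L2_set_mono)
      fix \<xi>
      have "?w f \<xi> \<le> sqrt (weight s \<xi>) * (a * cmod (g \<xi>) + b * cmod (h \<xi>))"
        by (rule mult_left_mono[OF le]) simp
      then show "?w f \<xi> \<le> a * ?w g \<xi> + b * ?w h \<xi>"
        by (simp add: algebra_simps)
    qed simp
    also have "\<dots> \<le> L2_set (\<lambda>\<xi>. a * ?w g \<xi>) F + L2_set (\<lambda>\<xi>. b * ?w h \<xi>) F"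
      by (rule L2_set_triangle_ineq)
    also have "\<dots> = a * L2_set (?w g) F + b * L2_set (?w h) F"
      using ab by (simp add: L2_set_right_distrib)
    also have "\<dots> \<le> a * hnorm s g + b * hnorm s h"
      using ab L2_set_le_hnorm[OF g] L2_set_le_hnorm[OF h] by (intro add_mono mult_left_mono) auto
    finally show ?thesis .
  qed
  then show "in_H s f" "hnorm s f \<le> a * hnorm s g + b * hnorm s h"
    using in_H_hnorm_leI[OF _ L] ab by auto
qed

lemma H_dominated:
  assumes g: "in_H s g" and a: "a \<ge> 0"
    and le: "\<And>\<xi>. cmod (f \<xi>) \<le> a * cmod (g \<xi>)"
  shows "in_H s f" "hnorm s f \<le> a * hnorm s g"
  using H_dominated2[OF g g a order_refl, of f] le by auto

lemma H_add:
  assumes "in_H s f" "in_H s g"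
  shows "in_H s (\<lambda>\<xi>. f \<xi> + g \<xi>)" "hnorm s (\<lambda>\<xi>. f \<xi> + g \<xi>) \<le> hnorm s f + hnorm s g"
  using H_dominated2[OF assms, of 1 1 "\<lambda>\<xi>. f \<xi> + g \<xi>"] by (auto intro: norm_triangle_ineq)

lemma H_diff:
  assumes "in_H s f" "in_H s g"
  shows "in_H s (\<lambda>\<xi>. f \<xi> - g \<xi>)" "hnorm s (\<lambda>\<xi>. f \<xi> - g \<xi>) \<le> hnorm s f + hnorm s g"
  using H_dominated2[OF assms, of 1 1 "\<lambda>\<xi>. f \<xi> - g \<xi>"] by (auto intro: norm_triangle_ineq4)

lemma H_cmult:
  assumes "in_H s f"
  shows "in_H s (\<lambda>\<xi>. c * f \<xi>)" "hnorm s (\<lambda>\<xi>. c * f \<xi>) \<le> cmod c * hnorm s f"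
  using H_dominated[OF assms, of "cmod c" "\<lambda>\<xi>. c * f \<xi>"] by (auto simp: norm_mult)

lemma H_mono:
  assumes "in_H s' f" "s \<le> s'"
  shows "in_H s f" "hnorm s f \<le> hnorm s' f"
proof -
  have L: "L2_set (\<lambda>\<xi>. sqrt (weight s \<xi>) * cmod (f \<xi>)) F \<le> hnorm s' f" for F
  proof -
    have "L2_set (\<lambda>\<xi>. sqrt (weight s \<xi>) * cmod (f \<xi>)) F
        \<le> L2_set (\<lambda>\<xi>. sqrt (weight s' \<xi>) * cmod (f \<xi>)) F"
      by (intro L2_set_mono mult_right_mono real_sqrt_le_mono weight_mono assms(2)) auto
    also have "\<dots> \<le> hnorm s' f" by (rule L2_set_le_hnorm[OF assms(1)])
    finally show ?thesis .
  qed
  then show "in_H s f" "hnorm s f \<le> hnorm s' f" using in_H_hnorm_leI[OF hnorm_nonneg L] by auto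
qed

section \<open>Embedding of \<open>H\<^sup>s\<close> into absolutely summable coefficients\<close>

lemma summable_on_int_weight:
  fixes p :: real
  assumes p: "p > 1/2"
  shows "(\<lambda>k::int. (1 + (real_of_int k)^2) powr (-p)) summable_on UNIV"
proof -
  define h where "h = (\<lambda>k::int. (1 + (real_of_int k)^2) powr (-p))"
  have h_nonneg: "h k \<ge> 0" for k unfolding h_def by simp
  have sn: "summable (\<lambda>n::nat. real n powr (-(2*p)))"
    using p by (subst summable_real_powr_iff) auto
  have le: "h (int n) \<le> real n powr (-(2*p))" if "n \<ge> 1" for n
  proof -
    have "h (int n) \<le> ((real n)^2) powr (-p)"
      unfolding h_def using p that by (intro powr_mono2') (auto simp: add_pos_nonneg)
    also have "((real n)^2) powr (-p) = (real n powr 2) powr (-p)"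
      using that by simp
    also have "\<dots> = real n powr (2 * -p)" by (rule powr_powr)
    finally show ?thesis by simp
  qed
  have pos: "summable (\<lambda>n. h (int n))"
    by (rule summable_comparison_test'[OF sn, of 1]) (use le h_nonneg in auto)
  moreover have "h (- int n) = h (int n)" for n unfolding h_def by simp
  ultimately have neg: "summable (\<lambda>n. h (- int n))" by simp
  have "h summable_on range int"
    using pos h_nonneg
    by (subst summable_on_reindex) (auto simp: inj_on_def o_def summable_on_UNIV_nonneg_real_iff)
  moreover have "h summable_on range (\<lambda>n. - int n)"
    using neg h_nonneg
    by (subst summable_on_reindex) (auto simp: inj_on_def o_def summable_on_UNIV_nonneg_real_iff)
  ultimately have "h summable_on (range int \<union> range (\<lambda>n. - int n))"
    by (rule summable_on_union)
  also have "range int \<union> range (\<lambda>n. - int n) = UNIV"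
  proof -
    have "k \<in> range int \<union> range (\<lambda>n. - int n)" for k :: int
      by (cases "k \<ge> 0") (auto simp: image_iff intro: exI[of _ "nat k"] exI[of _ "nat (- k)"])
    then show ?thesis by blast
  qed
  finally show ?thesis unfolding h_def .
qed

lemma summable_on_prod_coords:
  fixes h :: "int \<Rightarrow> real"
  assumes h_nonneg: "\<And>k. h k \<ge> 0" and h: "h summable_on UNIV"
  shows "(\<lambda>\<xi>::int^'d. \<Prod>i\<in>UNIV. h (\<xi> $ i)) summable_on UNIV"
proof (rule nonneg_bdd_above_summable_on)
  show "0 \<le> (\<Prod>i\<in>UNIV. h (\<xi> $ i))" for \<xi> :: "int^'d" by (simp add: prod_nonneg h_nonneg)
  show "bdd_above (sum (\<lambda>\<xi>::int^'d. \<Prod>i\<in>UNIV. h (\<xi> $ i)) ` {F. F \<subseteq> UNIV \<and> finite F})"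
  proof (rule bdd_aboveI2)
    fix F :: "(int^'d) set" assume "F \<in> {F. F \<subseteq> UNIV \<and> finite F}"
    then have fin: "finite F" by simp
    define P where "P = (\<lambda>i. (\<lambda>\<xi>. \<xi> $ i) ` F)"
    have finP: "finite (P i)" for i unfolding P_def using fin by simp
    have sub: "F \<subseteq> vec_lambda ` (PiE UNIV P)"
    proof
      fix \<xi> assume "\<xi> \<in> F"
      then have "vec_nth \<xi> \<in> PiE UNIV P" unfolding P_def by auto
      moreover have "\<xi> = vec_lambda (vec_nth \<xi>)" by simp
      ultimately show "\<xi> \<in> vec_lambda ` (PiE UNIV P)" by blast
    qed
    have finPi: "finite (PiE (UNIV::'d set) P)" using finP by (intro finite_PiE) auto
    have inj: "inj_on vec_lambda (PiE (UNIV::'d set) P)"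
      by (rule inj_onI) (metis vec_lambda_inverse UNIV_I)
    have "(\<Sum>\<xi>\<in>F. \<Prod>i\<in>UNIV. h (\<xi> $ i)) \<le> (\<Sum>\<xi>\<in>vec_lambda ` (PiE UNIV P). \<Prod>i\<in>UNIV. h (\<xi> $ i))"
      using sub finPi by (intro sum_mono2) (auto simp: prod_nonneg h_nonneg)
    also have "\<dots> = (\<Sum>g\<in>PiE UNIV P. \<Prod>i\<in>UNIV. h (g i))"
      by (subst sum.reindex[OF inj]) simp
    also have "\<dots> = (\<Prod>i\<in>UNIV. \<Sum>k\<in>P i. h k)"
      using finP by (subst prod_sum_PiE) auto
    also have "\<dots> \<le> (\<Prod>i\<in>(UNIV::'d set). infsum h UNIV)"
      by (intro prod_mono conjI sum_nonneg finite_sum_le_infsum h finP) (auto simp: h_nonneg)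
    finally show "(\<Sum>\<xi>\<in>F. \<Prod>i\<in>UNIV. h (\<xi> $ i)) \<le> (\<Prod>i\<in>(UNIV::'d set). infsum h UNIV)" .
  qed
qed

lemma summable_on_weight_neg:
  assumes r: "r > real CARD('d::finite) / 2"
  shows "(\<lambda>\<xi>::int^'d. weight (-r) \<xi>) summable_on UNIV"
proof -
  define d where "d = real CARD('d)"
  have d_pos: "d > 0" unfolding d_def by simp
  define h where "h = (\<lambda>k::int. (1 + (real_of_int k)^2) powr (-(r/d)))"
  have "1/2 < r/d" using r d_pos unfolding d_def by (simp add: field_simps)
  then have "(\<lambda>\<xi>::int^'d. \<Prod>i\<in>UNIV. h (\<xi> $ i)) summable_on UNIV"
    unfolding h_def by (intro summable_on_prod_coords summable_on_int_weight) simp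
  moreover have "weight (-r) \<xi> \<le> (\<Prod>i\<in>UNIV. h (\<xi> $ i))" for \<xi> :: "int^'d"
  proof -
    have "1 + (real_of_int (\<xi>$i))^2 \<le> 1 + sqn \<xi>" for i
      unfolding sqn_def by (simp, intro member_le_sum) auto
    then have "(\<Prod>i\<in>(UNIV::'d set). 1 + (real_of_int (\<xi>$i))^2) \<le> (\<Prod>i\<in>(UNIV::'d set). 1 + sqn \<xi>)"
      by (intro prod_mono) auto
    then have P: "(\<Prod>i\<in>(UNIV::'d set). 1 + (real_of_int (\<xi>$i))^2) \<le> (1 + sqn \<xi>) ^ CARD('d)"
      by simp
    have pos: "(\<Prod>i\<in>(UNIV::'d set). 1 + (real_of_int (\<xi>$i))^2) > 0"
      by (intro prod_pos) (auto simp: add_pos_nonneg)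
    have "1 + sqn \<xi> > 0" using sqn_nonneg[of \<xi>] by linarith
    then have "(1 + sqn \<xi>) ^ CARD('d) = (1 + sqn \<xi>) powr d"
      unfolding d_def by (rule powr_realpow[symmetric])
    then have "((1 + sqn \<xi>) ^ CARD('d)) powr (-(r/d)) = (1 + sqn \<xi>) powr (d * (-(r/d)))"
      by (simp add: powr_powr)
    then have "weight (-r) \<xi> = ((1 + sqn \<xi>) ^ CARD('d)) powr (-(r/d))"
      unfolding weight_def using d_pos by simp
    also have "\<dots> \<le> (\<Prod>i\<in>(UNIV::'d set). 1 + (real_of_int (\<xi>$i))^2) powr (-(r/d))"
      using P pos r d_pos unfolding d_def by (intro powr_mono2') auto
    also have "\<dots> = (\<Prod>i\<in>UNIV. h (\<xi> $ i))" unfolding h_def by (simp add: prod_powr_distrib)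
    finally show ?thesis .
  qed
  ultimately show ?thesis by (rule summable_on_comparison_test) auto
qed

definition weight_sum :: "real \<Rightarrow> ('d::finite) itself \<Rightarrow> real" where
  "weight_sum s _ = (\<Sum>\<^sub>\<infinity>\<xi>::int^'d. weight (-s) \<xi>)"

lemma weight_sum_nonneg: "weight_sum s TYPE('d::finite) \<ge> 0"
  unfolding weight_sum_def by (intro infsum_nonneg) auto

definition l1 :: "('d::finite) fcoef \<Rightarrow> bool" where
  "l1 f \<longleftrightarrow> (\<lambda>\<xi>. cmod (f \<xi>)) summable_on UNIV"

definition l1_norm :: "('d::finite) fcoef \<Rightarrow> real" where
  "l1_norm f = (\<Sum>\<^sub>\<infinity>\<xi>. cmod (f \<xi>))"

lemma norm_coef_le_l1_norm: "l1 f \<Longrightarrow> cmod (f \<xi>) \<le> l1_norm f"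
  unfolding l1_def l1_norm_def
  using finite_sum_le_infsum[of "\<lambda>\<xi>. cmod (f \<xi>)" UNIV "{\<xi>}"] by auto

lemma H_imp_l1:
  assumes s: "s > real CARD('d::finite) / 2" and f: "in_H s (f :: 'd fcoef)"
  shows "l1 f" "l1_norm f \<le> sqrt (weight_sum s TYPE('d)) * hnorm s f"
proof -
  have ws: "(\<lambda>\<xi>::int^'d. weight (-s) \<xi>) summable_on UNIV" by (rule summable_on_weight_neg[OF s])
  have b: "(\<Sum>\<xi>\<in>F. cmod (f \<xi>)) \<le> sqrt (weight_sum s TYPE('d)) * hnorm s f" if "finite F" for F
  proof -
    have "weight (-s) \<xi> * weight s \<xi> = 1" for \<xi> :: "int^'d"
      using weight_add[of "-s" s \<xi>] sqn_nonneg[of \<xi>] by (auto simp: weight_def split: if_splits)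
    then have "sqrt (weight (-s) \<xi>) * sqrt (weight s \<xi>) = 1" for \<xi> :: "int^'d"
      by (simp add: real_sqrt_mult[symmetric])
    then have e: "cmod (f \<xi>) = sqrt (weight (-s) \<xi>) * (sqrt (weight s \<xi>) * cmod (f \<xi>))" for \<xi>
      by (metis mult.assoc mult_1)
    have "(\<Sum>\<xi>\<in>F. cmod (f \<xi>))
        = (\<Sum>\<xi>\<in>F. \<bar>sqrt (weight (-s) \<xi>)\<bar> * \<bar>sqrt (weight s \<xi>) * cmod (f \<xi>)\<bar>)"
      by (subst e) simp
    also have "\<dots> \<le> L2_set (\<lambda>\<xi>. sqrt (weight (-s) \<xi>)) F * L2_set (\<lambda>\<xi>. sqrt (weight s \<xi>) * cmod (f \<xi>)) F"
      by (rule L2_set_mult_ineq)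
    also have "\<dots> \<le> sqrt (weight_sum s TYPE('d)) * hnorm s f"
    proof (intro mult_mono L2_set_le_hnorm f)
      have "(\<Sum>\<xi>\<in>F. weight (-s) \<xi>) \<le> weight_sum s TYPE('d)" unfolding weight_sum_def
        by (rule finite_sum_le_infsum[OF ws that]) auto
      then show "L2_set (\<lambda>\<xi>. sqrt (weight (-s) \<xi>)) F \<le> sqrt (weight_sum s TYPE('d))"
        unfolding L2_set_def by simp
    qed (auto simp: weight_sum_nonneg)
    finally show ?thesis .
  qed
  show sm: "l1 f"
    unfolding l1_def by (rule nonneg_bdd_above_summable_on) (auto intro!: bdd_aboveI2 b)
  show "l1_norm f \<le> sqrt (weight_sum s TYPE('d)) * hnorm s f"
    unfolding l1_norm_def by (rule infsum_le_finite_sums[OF sm[unfolded l1_def]]) (use b in auto)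
qed

section \<open>Convolution of Fourier coefficients\<close>

lemma summable_on_reflect:
  fixes g :: "int^'d \<Rightarrow> 'a::real_normed_vector"
  shows "(\<lambda>\<zeta>. g (\<xi> - \<zeta>)) summable_on UNIV \<longleftrightarrow> g summable_on UNIV"
proof -
  have "bij_betw (\<lambda>\<zeta>. \<xi> - \<zeta>) UNIV UNIV" by (rule bij_betwI[of _ _ _ "\<lambda>\<zeta>. \<xi> - \<zeta>"]) auto
  from summable_on_reindex_bij_betw[OF this, of g] show ?thesis by simp
qed

lemma infsum_reflect:
  fixes g :: "int^'d \<Rightarrow> 'a::real_normed_vector"
  shows "(\<Sum>\<^sub>\<infinity>\<zeta>. g (\<xi> - \<zeta>)) = infsum g UNIV"
proof -
  have "bij_betw (\<lambda>\<zeta>. \<xi> - \<zeta>) UNIV UNIV" by (rule bij_betwI[of _ _ _ "\<lambda>\<zeta>. \<xi> - \<zeta>"]) auto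
  from infsum_reindex_bij_betw[OF this, of g] show ?thesis by simp
qed

lemma infsum_shift:
  fixes g :: "int^'d \<Rightarrow> 'a::real_normed_vector"
  shows "(\<Sum>\<^sub>\<infinity>\<zeta>. g (\<zeta> - \<eta>)) = infsum g UNIV"
proof -
  have "bij_betw (\<lambda>\<zeta>. \<zeta> - \<eta>) UNIV UNIV" by (rule bij_betwI[of _ _ _ "\<lambda>\<zeta>. \<zeta> + \<eta>"]) auto
  from infsum_reindex_bij_betw[OF this, of g] show ?thesis by simp
qed

lemma summable_on_uminus_index:
  fixes g :: "int^'d \<Rightarrow> 'a::real_normed_vector"
  shows "(\<lambda>\<zeta>. g (- \<zeta>)) summable_on UNIV \<longleftrightarrow> g summable_on UNIV"
proof -
  have "bij_betw (\<lambda>\<zeta>::int^'d. - \<zeta>) UNIV UNIV" by (rule bij_betwI[of _ _ _ "\<lambda>\<zeta>. - \<zeta>"]) auto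
  from summable_on_reindex_bij_betw[OF this, of g] show ?thesis by simp
qed

lemma infsum_uminus_index:
  fixes g :: "int^'d \<Rightarrow> 'a::real_normed_vector"
  shows "(\<Sum>\<^sub>\<infinity>\<zeta>. g (- \<zeta>)) = infsum g UNIV"
proof -
  have "bij_betw (\<lambda>\<zeta>::int^'d. - \<zeta>) UNIV UNIV" by (rule bij_betwI[of _ _ _ "\<lambda>\<zeta>. - \<zeta>"]) auto
  from infsum_reindex_bij_betw[OF this, of g] show ?thesis by simp
qed

lemma summable_on_conv:
  assumes "l1 f" "l1 g"
  shows "(\<lambda>\<eta>. cmod (f \<eta>) * cmod (g (\<xi> - \<eta>))) summable_on UNIV"
    "(\<lambda>\<eta>. f \<eta> * g (\<xi> - \<eta>)) summable_on UNIV"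
proof -
  have "(\<lambda>\<eta>. cmod (f \<eta>) * l1_norm g) summable_on UNIV"
    using assms(1) unfolding l1_def by (rule summable_on_cmult_left)
  moreover have "cmod (f \<eta>) * cmod (g (\<xi> - \<eta>)) \<le> cmod (f \<eta>) * l1_norm g" for \<eta>
    using norm_coef_le_l1_norm[OF assms(2)] by (rule mult_left_mono) simp
  ultimately show abs: "(\<lambda>\<eta>. cmod (f \<eta>) * cmod (g (\<xi> - \<eta>))) summable_on UNIV"
    by (rule summable_on_comparison_test) simp
  show "(\<lambda>\<eta>. f \<eta> * g (\<xi> - \<eta>)) summable_on UNIV"
    by (rule abs_summable_summable) (use abs in \<open>simp add: norm_mult\<close>)
qed

definition conv_abs :: "('d::finite) fcoef \<Rightarrow> 'd fcoef \<Rightarrow> int^'d \<Rightarrow> real" where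
  "conv_abs f g \<xi> = (\<Sum>\<^sub>\<infinity>\<eta>. cmod (f \<eta>) * cmod (g (\<xi> - \<eta>)))"

lemma conv_abs_nonneg: "conv_abs f g \<xi> \<ge> 0"
  unfolding conv_abs_def by (intro infsum_nonneg) auto

lemma norm_conv_le_conv_abs:
  assumes "l1 f" "l1 g"
  shows "cmod (conv f g \<xi>) \<le> conv_abs f g \<xi>"
  unfolding conv_def conv_abs_def
  by (rule norm_infsum_le[OF has_sum_infsum has_sum_infsum])
     (use summable_on_conv[OF assms] in \<open>auto simp: norm_mult\<close>)

lemma conv_abs_le:
  assumes "l1 f" "l1 g"
  shows "conv_abs f g \<xi> \<le> l1_norm f * l1_norm g"
proof -
  have "conv_abs f g \<xi> \<le> (\<Sum>\<^sub>\<infinity>\<eta>. cmod (f \<eta>) * l1_norm g)" unfolding conv_abs_def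
    by (rule infsum_mono) (use summable_on_conv[OF assms] assms(1) in
        \<open>auto simp: l1_def intro!: summable_on_cmult_left mult_left_mono norm_coef_le_l1_norm[OF assms(2)]\<close>)
  also have "\<dots> = l1_norm f * l1_norm g"
    unfolding l1_norm_def by (rule infsum_cmult_left) (use assms in \<open>auto simp: l1_def\<close>)
  finally show ?thesis .
qed

lemma conv_comm: "conv f g = conv g f"
proof
  fix \<xi>
  have "conv f g \<xi> = (\<Sum>\<^sub>\<infinity>\<eta>. f (\<xi> - \<eta>) * g (\<xi> - (\<xi> - \<eta>)))"
    unfolding conv_def by (rule infsum_reflect[symmetric, where g="\<lambda>\<eta>. f \<eta> * g (\<xi> - \<eta>)"])
  also have "\<dots> = conv g f \<xi>" unfolding conv_def by (simp add: mult.commute)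
  finally show "conv f g \<xi> = conv g f \<xi>" .
qed

lemma conv_diff_left:
  assumes "l1 f" "l1 g" "l1 h"
  shows "conv (\<lambda>x. f x - g x) h = (\<lambda>\<xi>. conv f h \<xi> - conv g h \<xi>)"
proof
  fix \<xi>
  have "conv (\<lambda>x. f x - g x) h \<xi> = (\<Sum>\<^sub>\<infinity>\<eta>. f \<eta> * h (\<xi> - \<eta>) + (- (g \<eta> * h (\<xi> - \<eta>))))"
    unfolding conv_def by (simp add: algebra_simps)
  also have "\<dots> = conv f h \<xi> + (\<Sum>\<^sub>\<infinity>\<eta>. - (g \<eta> * h (\<xi> - \<eta>)))"
    unfolding conv_def
    by (rule infsum_add) (use summable_on_conv(2)[OF assms(1,3)] summable_on_conv(2)[OF assms(2,3)] in \<open>auto simp: summable_on_uminus\<close>)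
  also have "\<dots> = conv f h \<xi> - conv g h \<xi>" unfolding conv_def by (simp add: infsum_uminus)
  finally show "conv (\<lambda>x. f x - g x) h \<xi> = conv f h \<xi> - conv g h \<xi>" .
qed

lemma conv_diff_right:
  assumes "l1 f" "l1 g" "l1 h"
  shows "conv h (\<lambda>x. f x - g x) = (\<lambda>\<xi>. conv h f \<xi> - conv h g \<xi>)"
  using conv_diff_left[OF assms] by (simp add: conv_comm)

lemma conv_cmult_left: "conv (\<lambda>x. c * f x) h = (\<lambda>\<xi>. c * conv f h \<xi>)"
  unfolding conv_def by (simp add: mult.assoc infsum_cmult_right')

lemma conv_cmult_right: "conv f (\<lambda>x. c * h x) = (\<lambda>\<xi>. c * conv f h \<xi>)"
  using conv_cmult_left[of c h f] by (simp add: conv_comm)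

lemma conv_assoc:
  assumes f: "l1 f" and g: "l1 g" and h: "l1 h"
  shows "conv (conv f g) h = conv f (conv g h)"
proof
  fix \<xi>
  define F where "F = (\<lambda>(\<zeta>, \<eta>). f \<eta> * g (\<zeta> - \<eta>) * h (\<xi> - \<zeta>))"
  have "(\<lambda>p. norm (F p)) summable_on Sigma UNIV (\<lambda>_. UNIV)"
  proof (rule iffD2[OF Infinite_Sum.abs_summable_on_Sigma_iff], intro conjI ballI)
    fix \<zeta>
    show "(\<lambda>\<eta>. norm (F (\<zeta>, \<eta>))) summable_on UNIV"
      using summable_on_cmult_left[OF summable_on_conv(1)[OF f g, of \<zeta>], of "cmod (h (\<xi> - \<zeta>))"]
      by (simp add: norm_mult F_def)
  next
    have s: "(\<lambda>\<zeta>. (l1_norm f * l1_norm g) * cmod (h (\<xi> - \<zeta>))) summable_on UNIV"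
      using h unfolding l1_def
      by (intro summable_on_cmult_right) (subst summable_on_reflect[where g="\<lambda>x. cmod (h x)"])
    have e: "(\<Sum>\<^sub>\<infinity>\<eta>. norm (F (\<zeta>, \<eta>))) = conv_abs f g \<zeta> * cmod (h (\<xi> - \<zeta>))" for \<zeta>
      unfolding conv_abs_def F_def by (simp add: norm_mult infsum_cmult_left')
    show "(\<lambda>\<zeta>. norm (\<Sum>\<^sub>\<infinity>\<eta>. norm (F (\<zeta>, \<eta>)))) summable_on UNIV"
      unfolding e
      by (rule summable_on_comparison_test[OF s])
         (auto simp: abs_mult conv_abs_nonneg intro!: mult_right_mono conv_abs_le f g)
  qed
  then have F: "F summable_on UNIV \<times> UNIV"
    by (simp add: summable_on_iff_abs_summable_on_complex)
  have "conv (conv f g) h \<xi> = (\<Sum>\<^sub>\<infinity>\<zeta>. \<Sum>\<^sub>\<infinity>\<eta>. f \<eta> * g (\<zeta> - \<eta>) * h (\<xi> - \<zeta>))"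
    unfolding conv_def by (simp add: infsum_cmult_left')
  also have "\<dots> = (\<Sum>\<^sub>\<infinity>\<eta>. \<Sum>\<^sub>\<infinity>\<zeta>. f \<eta> * g (\<zeta> - \<eta>) * h (\<xi> - \<zeta>))"
    using F unfolding F_def by (rule infsum_swap_banach)
  also have "\<dots> = (\<Sum>\<^sub>\<infinity>\<eta>. f \<eta> * (\<Sum>\<^sub>\<infinity>\<zeta>. g (\<zeta> - \<eta>) * h (\<xi> - \<zeta>)))"
    by (simp add: mult.assoc infsum_cmult_right')
  also have "\<dots> = (\<Sum>\<^sub>\<infinity>\<eta>. f \<eta> * (\<Sum>\<^sub>\<infinity>\<mu>. g \<mu> * h ((\<xi> - \<eta>) - \<mu>)))"
  proof -
    have "(\<Sum>\<^sub>\<infinity>\<zeta>. g (\<zeta> - \<eta>) * h (\<xi> - \<zeta>)) = (\<Sum>\<^sub>\<infinity>\<mu>. g \<mu> * h ((\<xi> - \<eta>) - \<mu>))" for \<eta>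
      using infsum_shift[of "\<lambda>\<mu>. g \<mu> * h ((\<xi> - \<eta>) - \<mu>)" \<eta>] by (simp add: algebra_simps)
    then show ?thesis by simp
  qed
  also have "\<dots> = conv f (conv g h) \<xi>" unfolding conv_def ..
  finally show "conv (conv f g) h \<xi> = conv f (conv g h) \<xi>" .
qed

lemma cconj_conv: "cconj (conv f g) = conv (cconj f) (cconj g)"
proof
  fix \<xi>
  have "cconj (conv f g) \<xi> = (\<Sum>\<^sub>\<infinity>\<eta>. cnj (f \<eta>) * cnj (g (- \<xi> - \<eta>)))"
    unfolding cconj_def conv_def by (subst infsum_cnj[symmetric]) simp
  also have "\<dots> = (\<Sum>\<^sub>\<infinity>\<eta>. cnj (f (- \<eta>)) * cnj (g (- \<xi> - (- \<eta>))))"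
    by (rule infsum_uminus_index[symmetric, where g="\<lambda>\<eta>. cnj (f \<eta>) * cnj (g (- \<xi> - \<eta>))"])
  also have "\<dots> = conv (cconj f) (cconj g) \<xi>"
    unfolding cconj_def conv_def by (simp add: algebra_simps)
  finally show "cconj (conv f g) \<xi> = conv (cconj f) (cconj g) \<xi>" .
qed

lemma cconj_cconj[simp]: "cconj (cconj f) = f"
  unfolding cconj_def by simp

lemma cconj_diff: "cconj (\<lambda>x. f x - g x) = (\<lambda>x. cconj f x - cconj g x)"
  unfolding cconj_def by simp

lemma cconj_cmult: "cconj (\<lambda>x. c * f x) = (\<lambda>x. cnj c * cconj f x)"
  unfolding cconj_def by simp

lemma in_H_cconj: "in_H s f \<Longrightarrow> in_H s (cconj f)"
  unfolding in_H_iff_weight cconj_def weight_def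
  using summable_on_uminus_index[of "\<lambda>\<xi>. (1 + sqn \<xi>) powr s * (cmod (f \<xi>))^2"] by simp

lemma hnorm_cconj: "hnorm s (cconj f) = hnorm s f"
  unfolding hnorm_def cconj_def weight_def
  using infsum_uminus_index[of "\<lambda>\<xi>. (1 + sqn \<xi>) powr s * (cmod (f \<xi>))^2"] by simp

lemma norm_schr[simp]: "cmod (schr t f \<xi>) = cmod (f \<xi>)"
  unfolding schr_def by (simp add: norm_mult)

lemma schr_schr: "schr t (schr t' f) = schr (t + t') (f :: 'd::finite fcoef)"
proof
  fix \<xi> :: "int^'d"
  have "cis (- t * sqn \<xi>) * cis (- t' * sqn \<xi>) = cis (- (t + t') * sqn \<xi>)"
    by (simp add: cis_mult algebra_simps)
  then show "schr t (schr t' f) \<xi> = schr (t + t') f \<xi>"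
    unfolding schr_def by (metis mult.assoc)
qed

lemma schr_0[simp]: "schr 0 f = f"
  unfolding schr_def by simp

lemma in_H_schr[simp]: "in_H s (schr t f) \<longleftrightarrow> in_H s f"
  unfolding in_H_iff_weight by simp

lemma hnorm_schr[simp]: "hnorm s (schr t f) = hnorm s f"
  unfolding hnorm_def by simp

lemma schr_diff: "schr t (\<lambda>\<xi>. f \<xi> - g \<xi>) = (\<lambda>\<xi>. schr t f \<xi> - schr t g \<xi>)"
  unfolding schr_def by (simp add: algebra_simps)

lemma schr_cmult: "schr t (\<lambda>\<xi>. c * f \<xi>) = (\<lambda>\<xi>. c * schr t f \<xi>)"
  unfolding schr_def by (simp add: algebra_simps)

section \<open>Young's inequality and the algebra property of \<open>H\<^sup>s\<close>\<close>

lemma infsum_mult_le_sqrt: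
  fixes x y :: "'a \<Rightarrow> real"
  assumes x0: "\<And>i. x i \<ge> 0" and y0: "\<And>i. y i \<ge> 0"
    and xs: "(\<lambda>i. (x i)^2) summable_on A" and ys: "(\<lambda>i. (y i)^2) summable_on A"
  shows "(\<lambda>i. x i * y i) summable_on A"
    "(\<Sum>\<^sub>\<infinity>i\<in>A. x i * y i) \<le> sqrt (\<Sum>\<^sub>\<infinity>i\<in>A. (x i)^2) * sqrt (\<Sum>\<^sub>\<infinity>i\<in>A. (y i)^2)"
proof -
  have b: "sum (\<lambda>i. x i * y i) F \<le> sqrt (\<Sum>\<^sub>\<infinity>i\<in>A. (x i)^2) * sqrt (\<Sum>\<^sub>\<infinity>i\<in>A. (y i)^2)"
    if "finite F" "F \<subseteq> A" for F
  proof -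
    have "sum (\<lambda>i. x i * y i) F = (\<Sum>i\<in>F. \<bar>x i\<bar> * \<bar>y i\<bar>)" using x0 y0 by simp
    also have "\<dots> \<le> L2_set x F * L2_set y F" by (rule L2_set_mult_ineq)
    also have "\<dots> \<le> sqrt (\<Sum>\<^sub>\<infinity>i\<in>A. (x i)^2) * sqrt (\<Sum>\<^sub>\<infinity>i\<in>A. (y i)^2)"
      unfolding L2_set_def
      by (intro mult_mono real_sqrt_le_mono finite_sum_le_infsum xs ys that)
         (auto intro: sum_nonneg infsum_nonneg)
    finally show ?thesis .
  qed
  show s: "(\<lambda>i. x i * y i) summable_on A"
    by (rule nonneg_bdd_above_summable_on) (use x0 y0 b in \<open>auto intro!: bdd_aboveI2\<close>)
  show "(\<Sum>\<^sub>\<infinity>i\<in>A. x i * y i) \<le> sqrt (\<Sum>\<^sub>\<infinity>i\<in>A. (x i)^2) * sqrt (\<Sum>\<^sub>\<infinity>i\<in>A. (y i)^2)"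
    by (rule infsum_le_finite_sums[OF s b]) auto
qed

lemma has_sum_sum:
  fixes f :: "'i \<Rightarrow> 'a \<Rightarrow> 'b::topological_comm_monoid_add"
  assumes "finite I" "\<And>i. i \<in> I \<Longrightarrow> (f i has_sum S i) A"
  shows "((\<lambda>x. \<Sum>i\<in>I. f i x) has_sum (\<Sum>i\<in>I. S i)) A"
  using assms
proof (induction I rule: finite_induct)
  case (insert i I)
  have "((\<lambda>x. f i x + (\<Sum>i\<in>I. f i x)) has_sum (S i + sum S I)) A"
    by (intro has_sum_add) (use insert in auto)
  then show ?case using insert.hyps by simp
qed simp

lemma sum_shift_le_infsum:
  fixes b :: "int^'d \<Rightarrow> real"
  assumes "\<And>x. b x \<ge> 0" "b summable_on UNIV" "finite F"
  shows "(\<Sum>\<xi>\<in>F. b (\<xi> - \<eta>)) \<le> infsum b UNIV"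
proof -
  have "inj_on (\<lambda>\<xi>. \<xi> - \<eta>) F" by (auto simp: inj_on_def)
  then have "(\<Sum>\<xi>\<in>F. b (\<xi> - \<eta>)) = (\<Sum>\<zeta>\<in>(\<lambda>\<xi>. \<xi> - \<eta>) ` F. b \<zeta>)"
    by (simp add: sum.reindex)
  also have "\<dots> \<le> infsum b UNIV"
    by (rule finite_sum_le_infsum) (use assms in auto)
  finally show ?thesis .
qed

text \<open>Cauchy--Schwarz with respect to the weights \<open>b (\<xi> - \<eta>)\<close>.\<close>
lemma young_pointwise:
  fixes a b :: "int^'d \<Rightarrow> real"
  assumes a0: "\<And>x. a x \<ge> 0" and b0: "\<And>x. b x \<ge> 0"
    and as: "(\<lambda>x. (a x)^2) summable_on UNIV" and bs: "b summable_on UNIV"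
  shows "(\<lambda>\<eta>. a \<eta> * b (\<xi> - \<eta>)) summable_on UNIV"
    "(\<Sum>\<^sub>\<infinity>\<eta>. a \<eta> * b (\<xi> - \<eta>))^2 \<le> (\<Sum>\<^sub>\<infinity>\<eta>. (a \<eta>)^2 * b (\<xi> - \<eta>)) * infsum b UNIV"
proof -
  have b_le: "b x \<le> infsum b UNIV" for x
    using finite_sum_le_infsum[of b UNIV "{x}"] b0 bs by auto
  have a2b: "(\<lambda>\<eta>. (a \<eta>)^2 * b (\<xi> - \<eta>)) summable_on UNIV"
    by (rule summable_on_comparison_test[OF summable_on_cmult_left[OF as, of "infsum b UNIV"]])
       (auto intro!: mult_left_mono b_le simp: b0)
  have e1: "(\<lambda>\<eta>. (a \<eta> * sqrt (b (\<xi> - \<eta>)))^2) = (\<lambda>\<eta>. (a \<eta>)^2 * b (\<xi> - \<eta>))"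
    using b0 by (simp add: power_mult_distrib)
  have e2: "(\<lambda>\<eta>. (sqrt (b (\<xi> - \<eta>)))^2) = (\<lambda>\<eta>. b (\<xi> - \<eta>))"
    using b0 by simp
  have e3: "(\<lambda>\<eta>. a \<eta> * sqrt (b (\<xi> - \<eta>)) * sqrt (b (\<xi> - \<eta>))) = (\<lambda>\<eta>. a \<eta> * b (\<xi> - \<eta>))"
    using b0 by (simp add: mult.assoc)
  have brs: "(\<lambda>\<eta>. b (\<xi> - \<eta>)) summable_on UNIV"
    using bs by (subst summable_on_reflect)
  note CS = infsum_mult_le_sqrt[of "\<lambda>\<eta>. a \<eta> * sqrt (b (\<xi> - \<eta>))" "\<lambda>\<eta>. sqrt (b (\<xi> - \<eta>))" UNIV,
      unfolded e1 e2 e3, OF _ _ a2b brs]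
  show "(\<lambda>\<eta>. a \<eta> * b (\<xi> - \<eta>)) summable_on UNIV" using CS(1) a0 b0 by simp
  have "(\<Sum>\<^sub>\<infinity>\<eta>. a \<eta> * b (\<xi> - \<eta>))
      \<le> sqrt (\<Sum>\<^sub>\<infinity>\<eta>. (a \<eta>)^2 * b (\<xi> - \<eta>)) * sqrt (infsum b UNIV)"
    using CS(2) a0 b0 by (simp add: infsum_reflect)
  moreover have "0 \<le> (\<Sum>\<^sub>\<infinity>\<eta>. a \<eta> * b (\<xi> - \<eta>))" using a0 b0 by (intro infsum_nonneg) auto
  ultimately have "(\<Sum>\<^sub>\<infinity>\<eta>. a \<eta> * b (\<xi> - \<eta>))^2
      \<le> (sqrt (\<Sum>\<^sub>\<infinity>\<eta>. (a \<eta>)^2 * b (\<xi> - \<eta>)) * sqrt (infsum b UNIV))^2"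
    by (rule power_mono)
  also have "\<dots> = (\<Sum>\<^sub>\<infinity>\<eta>. (a \<eta>)^2 * b (\<xi> - \<eta>)) * infsum b UNIV"
    using a0 b0 by (simp add: power_mult_distrib infsum_nonneg)
  finally show "(\<Sum>\<^sub>\<infinity>\<eta>. a \<eta> * b (\<xi> - \<eta>))^2 \<le> (\<Sum>\<^sub>\<infinity>\<eta>. (a \<eta>)^2 * b (\<xi> - \<eta>)) * infsum b UNIV" .
qed

lemma sum_infsum_conv_le:
  fixes a b :: "int^'d \<Rightarrow> real"
  assumes a0: "\<And>x. a x \<ge> 0" and b0: "\<And>x. b x \<ge> 0"
    and as: "a summable_on UNIV" and bs: "b summable_on UNIV" and fin: "finite F"
  shows "(\<Sum>\<xi>\<in>F. \<Sum>\<^sub>\<infinity>\<eta>. a \<eta> * b (\<xi> - \<eta>)) \<le> infsum a UNIV * infsum b UNIV"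
proof -
  have b_le: "b x \<le> infsum b UNIV" for x
    using finite_sum_le_infsum[of b UNIV "{x}"] b0 bs by auto
  have conv_summable: "(\<lambda>\<eta>. a \<eta> * b (\<xi> - \<eta>)) summable_on UNIV" for \<xi>
  proof (rule summable_on_comparison_test[OF summable_on_cmult_left[OF as, of "infsum b UNIV"]])
    show "a \<eta> * b (\<xi> - \<eta>) \<le> a \<eta> * infsum b UNIV" for \<eta> by (rule mult_left_mono[OF b_le a0])
    show "0 \<le> a \<eta> * b (\<xi> - \<eta>)" for \<eta> using a0 b0 by simp
  qed
  have sum: "((\<lambda>\<eta>. \<Sum>\<xi>\<in>F. a \<eta> * b (\<xi> - \<eta>)) has_sum (\<Sum>\<xi>\<in>F. \<Sum>\<^sub>\<infinity>\<eta>. a \<eta> * b (\<xi> - \<eta>))) UNIV"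
    by (rule has_sum_sum[OF fin]) (use conv_summable in auto)
  then have summable: "(\<lambda>\<eta>. \<Sum>\<xi>\<in>F. a \<eta> * b (\<xi> - \<eta>)) summable_on UNIV"
    by (simp add: has_sum_iff)
  have "(\<Sum>\<xi>\<in>F. \<Sum>\<^sub>\<infinity>\<eta>. a \<eta> * b (\<xi> - \<eta>)) = (\<Sum>\<^sub>\<infinity>\<eta>. \<Sum>\<xi>\<in>F. a \<eta> * b (\<xi> - \<eta>))"
    using sum by (rule infsumI[symmetric])
  also have "\<dots> \<le> (\<Sum>\<^sub>\<infinity>\<eta>. a \<eta> * infsum b UNIV)"
  proof (rule infsum_mono[OF summable summable_on_cmult_left[OF as]])
    fix \<eta>
    have "(\<Sum>\<xi>\<in>F. a \<eta> * b (\<xi> - \<eta>)) = a \<eta> * (\<Sum>\<xi>\<in>F. b (\<xi> - \<eta>))"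
      by (simp add: sum_distrib_left)
    also have "\<dots> \<le> a \<eta> * infsum b UNIV"
      by (rule mult_left_mono[OF sum_shift_le_infsum[OF b0 bs fin] a0])
    finally show "(\<Sum>\<xi>\<in>F. a \<eta> * b (\<xi> - \<eta>)) \<le> a \<eta> * infsum b UNIV" .
  qed
  also have "\<dots> = infsum a UNIV * infsum b UNIV" by (rule infsum_cmult_left) (use as in auto)
  finally show ?thesis .
qed

lemma young_l2_l1:
  fixes a b :: "int^'d \<Rightarrow> real"
  assumes a0: "\<And>x. a x \<ge> 0" and b0: "\<And>x. b x \<ge> 0"
    and as: "(\<lambda>x. (a x)^2) summable_on UNIV" and bs: "b summable_on UNIV"
  shows "L2_set (\<lambda>\<xi>. \<Sum>\<^sub>\<infinity>\<eta>. a \<eta> * b (\<xi> - \<eta>)) F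
       \<le> sqrt (\<Sum>\<^sub>\<infinity>x. (a x)^2) * infsum b UNIV"
proof (cases "finite F")
  case fin: True
  define Sa where "Sa = (\<Sum>\<^sub>\<infinity>x. (a x)^2)"
  define Sb where "Sb = infsum b UNIV"
  have Sa0: "Sa \<ge> 0" unfolding Sa_def by (intro infsum_nonneg) auto
  have Sb0: "Sb \<ge> 0" unfolding Sb_def using b0 by (intro infsum_nonneg) auto
  have "(\<Sum>\<xi>\<in>F. (\<Sum>\<^sub>\<infinity>\<eta>. a \<eta> * b (\<xi> - \<eta>))^2) \<le> (\<Sum>\<xi>\<in>F. (\<Sum>\<^sub>\<infinity>\<eta>. (a \<eta>)^2 * b (\<xi> - \<eta>)) * Sb)"
    unfolding Sb_def by (rule sum_mono) (rule young_pointwise(2)[OF a0 b0 as bs])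
  also have "\<dots> = (\<Sum>\<xi>\<in>F. \<Sum>\<^sub>\<infinity>\<eta>. (a \<eta>)^2 * b (\<xi> - \<eta>)) * Sb"
    by (rule sum_distrib_right[symmetric])
  also have "\<dots> \<le> (Sa * Sb) * Sb"
    unfolding Sa_def Sb_def using sum_infsum_conv_le[OF _ b0 as bs fin] Sb0[unfolded Sb_def]
    by (intro mult_right_mono) auto
  also have "\<dots> = (sqrt Sa * Sb)^2"
    using Sa0 by (simp add: power_mult_distrib power2_eq_square)
  finally have "sqrt (\<Sum>\<xi>\<in>F. (\<Sum>\<^sub>\<infinity>\<eta>. a \<eta> * b (\<xi> - \<eta>))^2) \<le> sqrt ((sqrt Sa * Sb)^2)"
    by (rule real_sqrt_le_mono)
  then show ?thesis unfolding L2_set_def Sa_def[symmetric] Sb_def[symmetric]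
    using Sa0 Sb0 by simp
qed (simp add: infsum_nonneg assms)

definition bracket :: "int^'d \<Rightarrow> real" where
  "bracket \<xi> = sqrt (1 + sqn \<xi>)"

lemma bracket_pos: "bracket \<xi> > 0"
  unfolding bracket_def using sqn_nonneg[of \<xi>] by (simp add: add_pos_nonneg)

lemma bracket_triangle:
  fixes \<xi> \<eta> :: "int^'d"
  shows "bracket \<xi> \<le> bracket \<eta> + bracket (\<xi> - \<eta>)"
proof -
  define L where "L = (\<lambda>\<xi>::int^'d. L2_set (\<lambda>i. real_of_int (\<xi> $ i)) UNIV)"
  have sqn_eq: "sqn \<zeta> = (L \<zeta>)^2" for \<zeta> :: "int^'d"
    unfolding L_def L2_set_def sqn_def by (simp add: sum_nonneg)
  have L0: "L \<zeta> \<ge> 0" for \<zeta> unfolding L_def by simp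
  have "L \<xi> = L2_set (\<lambda>i. real_of_int (\<eta> $ i) + real_of_int ((\<xi> - \<eta>) $ i)) UNIV"
    unfolding L_def by simp
  also have "\<dots> \<le> L \<eta> + L (\<xi> - \<eta>)" unfolding L_def by (rule L2_set_triangle_ineq)
  finally have tri: "L \<xi> \<le> L \<eta> + L (\<xi> - \<eta>)" .
  define b c where "b = L \<eta>" and "c = L (\<xi> - \<eta>)"
  have b0: "b \<ge> 0" and c0: "c \<ge> 0" unfolding b_def c_def by (auto simp: L0)
  have "bracket \<xi> = sqrt (1 + (L \<xi>)^2)" unfolding bracket_def sqn_eq ..
  also have "\<dots> \<le> sqrt (1 + (b + c)^2)"
    using tri L0[of \<xi>] unfolding b_def c_def by (intro real_sqrt_le_mono add_left_mono power_mono) auto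
  also have "\<dots> \<le> sqrt (1 + b^2) + c"
  proof -
    have "2 * c * b \<le> 2 * c * sqrt (1 + b^2)"
      using c0 by (intro mult_left_mono) (auto simp: real_le_rsqrt)
    then have "1 + (b + c)^2 \<le> (sqrt (1 + b^2) + c)^2"
      by (simp add: power2_eq_square algebra_simps)
    then show ?thesis using c0 by (simp add: real_le_lsqrt)
  qed
  also have "\<dots> \<le> sqrt (1 + b^2) + sqrt (1 + c^2)"
    by (simp add: real_le_rsqrt)
  also have "\<dots> = bracket \<eta> + bracket (\<xi> - \<eta>)" unfolding bracket_def sqn_eq b_def c_def ..
  finally show ?thesis .
qed

lemma sqrt_weight_eq: "sqrt (weight s \<xi>) = bracket \<xi> powr s"
proof -
  have p: "1 + sqn \<xi> > 0" using sqn_nonneg[of \<xi>] by linarith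
  have "sqrt (weight s \<xi>) = ((1 + sqn \<xi>) powr s) powr (1/2)" unfolding weight_def
    by (simp add: powr_half_sqrt)
  also have "\<dots> = ((1 + sqn \<xi>) powr (1/2)) powr s" by (simp add: powr_powr mult.commute)
  also have "\<dots> = bracket \<xi> powr s" unfolding bracket_def using p by (simp add: powr_half_sqrt)
  finally show ?thesis .
qed

lemma sqrt_weight_split:
  assumes "s \<ge> 0"
  shows "sqrt (weight s \<xi>) \<le> 2 powr s * (sqrt (weight s \<eta>) + sqrt (weight s (\<xi> - \<eta>)))"
proof -
  define x y where "x = bracket \<eta>" and "y = bracket (\<xi> - \<eta>)"
  have x0: "x > 0" and y0: "y > 0" unfolding x_def y_def by (auto simp: bracket_pos)
  have "sqrt (weight s \<xi>) = bracket \<xi> powr s" by (rule sqrt_weight_eq)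
  also have "\<dots> \<le> (x + y) powr s"
    using bracket_triangle[of \<xi> \<eta>] bracket_pos[of \<xi>] assms unfolding x_def y_def
    by (intro powr_mono2) auto
  also have "\<dots> \<le> (2 * max x y) powr s"
    using x0 y0 assms by (intro powr_mono2) auto
  also have "\<dots> = 2 powr s * (max x y) powr s"
    using x0 y0 by (simp add: powr_mult)
  also have "\<dots> \<le> 2 powr s * (x powr s + y powr s)"
    by (intro mult_left_mono) (auto simp: max_def)
  also have "\<dots> = 2 powr s * (sqrt (weight s \<eta>) + sqrt (weight s (\<xi> - \<eta>)))"
    unfolding x_def y_def sqrt_weight_eq ..
  finally show ?thesis .
qed

lemma weighted_norm_conv_le:
  assumes "s \<ge> 0" "l1 f" "l1 g"
    and f: "(\<lambda>\<eta>. sqrt (weight s \<eta>) * cmod (f \<eta>) * cmod (g (\<xi> - \<eta>))) summable_on UNIV"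
    and g: "(\<lambda>\<eta>. cmod (f \<eta>) * (sqrt (weight s (\<xi> - \<eta>)) * cmod (g (\<xi> - \<eta>)))) summable_on UNIV"
  shows "sqrt (weight s \<xi>) * cmod (conv f g \<xi>)
    \<le> 2 powr s * ((\<Sum>\<^sub>\<infinity>\<eta>. sqrt (weight s \<eta>) * cmod (f \<eta>) * cmod (g (\<xi> - \<eta>)))
                + (\<Sum>\<^sub>\<infinity>\<eta>. cmod (f \<eta>) * (sqrt (weight s (\<xi> - \<eta>)) * cmod (g (\<xi> - \<eta>)))))"
proof -
  have "sqrt (weight s \<xi>) * cmod (conv f g \<xi>) \<le> sqrt (weight s \<xi>) * conv_abs f g \<xi>"
    by (intro mult_left_mono norm_conv_le_conv_abs assms(2,3)) auto
  also have "\<dots> = (\<Sum>\<^sub>\<infinity>\<eta>. sqrt (weight s \<xi>) * (cmod (f \<eta>) * cmod (g (\<xi> - \<eta>))))"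
    unfolding conv_abs_def by (simp add: infsum_cmult_right')
  also have "\<dots> \<le> (\<Sum>\<^sub>\<infinity>\<eta>. 2 powr s * (sqrt (weight s \<eta>) * cmod (f \<eta>) * cmod (g (\<xi> - \<eta>)))
      + 2 powr s * (cmod (f \<eta>) * (sqrt (weight s (\<xi> - \<eta>)) * cmod (g (\<xi> - \<eta>)))))"
  proof (rule infsum_mono)
    show "(\<lambda>\<eta>. sqrt (weight s \<xi>) * (cmod (f \<eta>) * cmod (g (\<xi> - \<eta>)))) summable_on UNIV"
      by (intro summable_on_cmult_right summable_on_conv(1) assms(2,3))
    show "(\<lambda>\<eta>. 2 powr s * (sqrt (weight s \<eta>) * cmod (f \<eta>) * cmod (g (\<xi> - \<eta>)))
        + 2 powr s * (cmod (f \<eta>) * (sqrt (weight s (\<xi> - \<eta>)) * cmod (g (\<xi> - \<eta>))))) summable_on UNIV"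
      by (intro summable_on_add summable_on_cmult_right f g)
    fix \<eta>
    have "sqrt (weight s \<xi>) * (cmod (f \<eta>) * cmod (g (\<xi> - \<eta>)))
        \<le> (2 powr s * (sqrt (weight s \<eta>) + sqrt (weight s (\<xi> - \<eta>)))) * (cmod (f \<eta>) * cmod (g (\<xi> - \<eta>)))"
      by (intro mult_right_mono sqrt_weight_split assms(1)) auto
    then show "sqrt (weight s \<xi>) * (cmod (f \<eta>) * cmod (g (\<xi> - \<eta>)))
        \<le> 2 powr s * (sqrt (weight s \<eta>) * cmod (f \<eta>) * cmod (g (\<xi> - \<eta>)))
          + 2 powr s * (cmod (f \<eta>) * (sqrt (weight s (\<xi> - \<eta>)) * cmod (g (\<xi> - \<eta>))))"
      by (simp add: algebra_simps)
  qed
  also have "\<dots> = 2 powr s * ((\<Sum>\<^sub>\<infinity>\<eta>. sqrt (weight s \<eta>) * cmod (f \<eta>) * cmod (g (\<xi> - \<eta>)))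
      + (\<Sum>\<^sub>\<infinity>\<eta>. cmod (f \<eta>) * (sqrt (weight s (\<xi> - \<eta>)) * cmod (g (\<xi> - \<eta>)))))"
    using f g by (simp add: infsum_add summable_on_cmult_right infsum_cmult_right' distrib_left)
  finally show ?thesis .
qed

lemma young_weighted:
  fixes f g :: "('d::finite) fcoef"
  assumes s: "s > real CARD('d) / 2" and f: "in_H s f" and g: "in_H s g"
  shows "(\<lambda>\<eta>. sqrt (weight s \<eta>) * cmod (f \<eta>) * cmod (g (\<xi> - \<eta>))) summable_on UNIV"
    "L2_set (\<lambda>\<xi>. \<Sum>\<^sub>\<infinity>\<eta>. sqrt (weight s \<eta>) * cmod (f \<eta>) * cmod (g (\<xi> - \<eta>))) K
      \<le> sqrt (weight_sum s TYPE('d)) * hnorm s f * hnorm s g"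
proof -
  have sq: "(\<lambda>\<xi>. (sqrt (weight s \<xi>) * cmod (f \<xi>))^2) = (\<lambda>\<xi>. weight s \<xi> * (cmod (f \<xi>))^2)"
    by (simp add: power_mult_distrib)
  have a: "(\<lambda>\<xi>. (sqrt (weight s \<xi>) * cmod (f \<xi>))^2) summable_on UNIV"
    using f unfolding sq in_H_iff_weight .
  have b: "(\<lambda>\<xi>. cmod (g \<xi>)) summable_on UNIV" "(\<Sum>\<^sub>\<infinity>\<xi>. cmod (g \<xi>)) \<le> sqrt (weight_sum s TYPE('d)) * hnorm s g"
    using H_imp_l1[OF s g] unfolding l1_def l1_norm_def by auto
  note Y = young_pointwise(1)[OF _ _ a b(1)] young_l2_l1[OF _ _ a b(1)]
  show "(\<lambda>\<eta>. sqrt (weight s \<eta>) * cmod (f \<eta>) * cmod (g (\<xi> - \<eta>))) summable_on UNIV"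
    using Y(1) by simp
  have "L2_set (\<lambda>\<xi>. \<Sum>\<^sub>\<infinity>\<eta>. sqrt (weight s \<eta>) * cmod (f \<eta>) * cmod (g (\<xi> - \<eta>))) K
      \<le> hnorm s f * (\<Sum>\<^sub>\<infinity>\<xi>. cmod (g \<xi>))"
    using Y(2)[of K] unfolding sq hnorm_def by simp
  also have "\<dots> \<le> hnorm s f * (sqrt (weight_sum s TYPE('d)) * hnorm s g)"
    using b(2) by (rule mult_left_mono) simp
  finally show "L2_set (\<lambda>\<xi>. \<Sum>\<^sub>\<infinity>\<eta>. sqrt (weight s \<eta>) * cmod (f \<eta>) * cmod (g (\<xi> - \<eta>))) K
      \<le> sqrt (weight_sum s TYPE('d)) * hnorm s f * hnorm s g"
    by (simp add: algebra_simps)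
qed

definition algebra_const :: "real \<Rightarrow> ('d::finite) itself \<Rightarrow> real" where
  "algebra_const s _ = 2 powr s * 2 * sqrt (weight_sum s TYPE('d))"

lemma algebra_const_nonneg: "algebra_const s TYPE('d::finite) \<ge> 0"
  unfolding algebra_const_def by (simp add: weight_sum_nonneg)

lemma H_conv:
  fixes f g :: "('d::finite) fcoef"
  assumes s: "s > real CARD('d) / 2" and f: "in_H s f" and g: "in_H s g"
  shows "in_H s (conv f g)" "hnorm s (conv f g) \<le> algebra_const s TYPE('d) * hnorm s f * hnorm s g"
proof -
  have s0: "s \<ge> 0" using s of_nat_0_le_iff[of "CARD('d)"] by linarith
  define c1 where "c1 = (\<lambda>\<xi>. \<Sum>\<^sub>\<infinity>\<eta>. sqrt (weight s \<eta>) * cmod (f \<eta>) * cmod (g (\<xi> - \<eta>)))"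
  define c2 where "c2 = (\<lambda>\<xi>. \<Sum>\<^sub>\<infinity>\<eta>. sqrt (weight s \<eta>) * cmod (g \<eta>) * cmod (f (\<xi> - \<eta>)))"
  have reflect: "(\<lambda>\<eta>. sqrt (weight s \<eta>) * cmod (g \<eta>) * cmod (f (\<xi> - \<eta>))) summable_on UNIV \<longleftrightarrow>
      (\<lambda>\<eta>. cmod (f \<eta>) * (sqrt (weight s (\<xi> - \<eta>)) * cmod (g (\<xi> - \<eta>)))) summable_on UNIV"
    "c2 \<xi> = (\<Sum>\<^sub>\<infinity>\<eta>. cmod (f \<eta>) * (sqrt (weight s (\<xi> - \<eta>)) * cmod (g (\<xi> - \<eta>))))" for \<xi>
    unfolding c2_def
    by (subst summable_on_reflect[symmetric, of _ \<xi>] infsum_reflect[symmetric, of _ \<xi>], simp add: mult_ac)+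
  have pointwise: "sqrt (weight s \<xi>) * cmod (conv f g \<xi>) \<le> 2 powr s * c1 \<xi> + 2 powr s * c2 \<xi>" for \<xi>
    using weighted_norm_conv_le[OF s0 H_imp_l1(1)[OF s f] H_imp_l1(1)[OF s g]]
      young_weighted(1)[OF s f g] young_weighted(1)[OF s g f] reflect[of \<xi>]
    unfolding c1_def by (simp add: distrib_left)
  have L: "L2_set (\<lambda>\<xi>. sqrt (weight s \<xi>) * cmod (conv f g \<xi>)) K
      \<le> algebra_const s TYPE('d) * hnorm s f * hnorm s g" for K
  proof -
    have "L2_set (\<lambda>\<xi>. sqrt (weight s \<xi>) * cmod (conv f g \<xi>)) K
        \<le> L2_set (\<lambda>\<xi>. 2 powr s * c1 \<xi> + 2 powr s * c2 \<xi>) K"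
      by (rule L2_set_mono) (auto intro: pointwise)
    also have "\<dots> \<le> 2 powr s * L2_set c1 K + 2 powr s * L2_set c2 K"
      using L2_set_triangle_ineq[of "\<lambda>\<xi>. 2 powr s * c1 \<xi>"] by (simp add: L2_set_right_distrib)
    also have "\<dots> \<le> 2 powr s * (sqrt (weight_sum s TYPE('d)) * hnorm s f * hnorm s g)
        + 2 powr s * (sqrt (weight_sum s TYPE('d)) * hnorm s g * hnorm s f)"
      unfolding c1_def c2_def
      by (intro add_mono mult_left_mono young_weighted(2) s f g) auto
    also have "\<dots> = algebra_const s TYPE('d) * hnorm s f * hnorm s g"
      unfolding algebra_const_def by (simp add: algebra_simps)
    finally show ?thesis .
  qed
  have "algebra_const s TYPE('d) * hnorm s f * hnorm s g \<ge> 0"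
    by (simp add: algebra_const_nonneg)
  from in_H_hnorm_leI[OF this L]
  show "in_H s (conv f g)" "hnorm s (conv f g) \<le> algebra_const s TYPE('d) * hnorm s f * hnorm s g"
    by auto
qed

section \<open>The cubic and quintic nonlinearities\<close>

definition trilinear :: "('d::finite) fcoef \<Rightarrow> 'd fcoef \<Rightarrow> 'd fcoef \<Rightarrow> 'd fcoef" where
  "trilinear a b c = conv (conv a (cconj b)) c"

lemma cubic_eq_trilinear: "cubic f = trilinear f f f"
  unfolding cubic_def trilinear_def ..

lemma quintic_eq_trilinear: "quintic f = trilinear (cubic f) f f"
  unfolding quintic_def trilinear_def cubic_def ..

lemma trilinear_cmult:
  "trilinear (\<lambda>\<xi>. c * a \<xi>) b d = (\<lambda>\<xi>. c * trilinear a b d \<xi>)"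
  "trilinear a (\<lambda>\<xi>. c * b \<xi>) d = (\<lambda>\<xi>. cnj c * trilinear a b d \<xi>)"
  "trilinear a b (\<lambda>\<xi>. c * d \<xi>) = (\<lambda>\<xi>. c * trilinear a b d \<xi>)"
  unfolding trilinear_def cconj_cmult by (simp_all add: conv_cmult_left conv_cmult_right)

lemma H_trilinear:
  fixes a b c :: "'d::finite fcoef"
  assumes s: "s > real CARD('d) / 2" and H: "in_H s a" "in_H s b" "in_H s c"
  shows "in_H s (trilinear a b c)"
    "hnorm s (trilinear a b c) \<le> (algebra_const s TYPE('d))^2 * hnorm s a * hnorm s b * hnorm s c"
proof -
  note ab = H_conv[OF s H(1) in_H_cconj[OF H(2)]]
  note abc = H_conv[OF s ab(1) H(3)]
  show "in_H s (trilinear a b c)" unfolding trilinear_def by (rule abc(1))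
  have "hnorm s (trilinear a b c) \<le> algebra_const s TYPE('d) * hnorm s (conv a (cconj b)) * hnorm s c"
    unfolding trilinear_def by (rule abc(2))
  also have "\<dots> \<le> algebra_const s TYPE('d) * (algebra_const s TYPE('d) * hnorm s a * hnorm s b) * hnorm s c"
    using ab(2) by (intro mult_right_mono mult_left_mono) (auto simp: algebra_const_nonneg hnorm_cconj)
  finally show "hnorm s (trilinear a b c) \<le> (algebra_const s TYPE('d))^2 * hnorm s a * hnorm s b * hnorm s c"
    by (simp add: power2_eq_square algebra_simps)
qed

lemma trilinear_diff:
  fixes a b c a' b' c' :: "'d::finite fcoef"
  assumes s: "s > real CARD('d) / 2"
    and H: "in_H s a" "in_H s b" "in_H s c" "in_H s a'" "in_H s b'" "in_H s c'"
  shows "(\<lambda>\<xi>. trilinear a b c \<xi> - trilinear a' b' c' \<xi>) =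
    (\<lambda>\<xi>. trilinear (\<lambda>x. a x - a' x) b c \<xi> + trilinear a' (\<lambda>x. b x - b' x) c \<xi>
        + trilinear a' b' (\<lambda>x. c x - c' x) \<xi>)"
proof -
  have l1: "l1 f" if "in_H s f" for f :: "'d fcoef" using H_imp_l1[OF s that] by simp
  have l1_conv: "l1 (conv f (cconj g))" if "in_H s f" "in_H s g" for f g :: "'d fcoef"
    using H_conv[OF s that(1) in_H_cconj[OF that(2)]] l1 by simp
  have "trilinear (\<lambda>x. a x - a' x) b c = (\<lambda>\<xi>. trilinear a b c \<xi> - trilinear a' b c \<xi>)"
    unfolding trilinear_def
    using H by (simp add: conv_diff_left l1 l1_conv in_H_cconj)
  moreover have "trilinear a' (\<lambda>x. b x - b' x) c = (\<lambda>\<xi>. trilinear a' b c \<xi> - trilinear a' b' c \<xi>)"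
    unfolding trilinear_def cconj_diff
    using H by (simp add: conv_diff_left conv_diff_right l1 l1_conv in_H_cconj)
  moreover have "trilinear a' b' (\<lambda>x. c x - c' x) = (\<lambda>\<xi>. trilinear a' b' c \<xi> - trilinear a' b' c' \<xi>)"
    unfolding trilinear_def using H by (simp add: conv_diff_right l1 l1_conv)
  ultimately show ?thesis by simp
qed

lemma H_trilinear_diff:
  fixes a b c a' b' c' :: "'d::finite fcoef"
  assumes s: "s > real CARD('d) / 2"
    and H: "in_H s a" "in_H s b" "in_H s c" "in_H s a'" "in_H s b'" "in_H s c'"
  shows "in_H s (\<lambda>\<xi>. trilinear a b c \<xi> - trilinear a' b' c' \<xi>)"
    "hnorm s (\<lambda>\<xi>. trilinear a b c \<xi> - trilinear a' b' c' \<xi>) \<le> (algebra_const s TYPE('d))^2 *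
       (hnorm s (\<lambda>x. a x - a' x) * hnorm s b * hnorm s c + hnorm s a' * hnorm s (\<lambda>x. b x - b' x) * hnorm s c
        + hnorm s a' * hnorm s b' * hnorm s (\<lambda>x. c x - c' x))"
proof -
  note D = H_diff(1)[OF H(1,4)] H_diff(1)[OF H(2,5)] H_diff(1)[OF H(3,6)]
  note t1 = H_trilinear[OF s D(1) H(2,3)]
    and t2 = H_trilinear[OF s H(4) D(2) H(3)]
    and t3 = H_trilinear[OF s H(4,5) D(3)]
  note t12 = H_add[OF t1(1) t2(1)]
  note t123 = H_add[OF t12(1) t3(1)]
  show "in_H s (\<lambda>\<xi>. trilinear a b c \<xi> - trilinear a' b' c' \<xi>)"
    unfolding trilinear_diff[OF s H] by (rule t123(1))
  show "hnorm s (\<lambda>\<xi>. trilinear a b c \<xi> - trilinear a' b' c' \<xi>) \<le> (algebra_const s TYPE('d))^2 *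
       (hnorm s (\<lambda>x. a x - a' x) * hnorm s b * hnorm s c + hnorm s a' * hnorm s (\<lambda>x. b x - b' x) * hnorm s c
        + hnorm s a' * hnorm s b' * hnorm s (\<lambda>x. c x - c' x))"
    unfolding trilinear_diff[OF s H] using t123(2) t12(2) t1(2) t2(2) t3(2)
    by (simp add: algebra_simps)
qed

lemma H_cubic:
  assumes s: "s > real CARD('d) / 2" and f: "in_H s (f :: 'd::finite fcoef)"
  shows "in_H s (cubic f)" "hnorm s (cubic f) \<le> (algebra_const s TYPE('d))^2 * (hnorm s f)^3"
  using H_trilinear[OF s f f f] unfolding cubic_eq_trilinear
  by (auto simp: power3_eq_cube algebra_simps)

lemma H_cubic_lipschitz:
  fixes f g :: "'d::finite fcoef"
  assumes s: "s > real CARD('d) / 2"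
    and f: "in_H s f" and g: "in_H s g" and R: "hnorm s f \<le> R" "hnorm s g \<le> R"
  shows "in_H s (\<lambda>\<xi>. cubic f \<xi> - cubic g \<xi>)"
    "hnorm s (\<lambda>\<xi>. cubic f \<xi> - cubic g \<xi>)
       \<le> 3 * (algebra_const s TYPE('d))^2 * R^2 * hnorm s (\<lambda>x. f x - g x)"
proof -
  note X = H_trilinear_diff[OF s f f f g g g]
  show "in_H s (\<lambda>\<xi>. cubic f \<xi> - cubic g \<xi>)" unfolding cubic_eq_trilinear by (rule X(1))
  define D where "D = hnorm s (\<lambda>x. f x - g x)"
  have "hnorm s (\<lambda>\<xi>. cubic f \<xi> - cubic g \<xi>)
      \<le> (algebra_const s TYPE('d))^2 * (D * hnorm s f * hnorm s f + hnorm s g * D * hnorm s f + hnorm s g * hnorm s g * D)"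
    unfolding cubic_eq_trilinear D_def by (rule X(2))
  also have "\<dots> \<le> (algebra_const s TYPE('d))^2 * (D * R * R + R * D * R + R * R * D)"
    using R order_trans[OF hnorm_nonneg R(1)] unfolding D_def
    by (intro mult_left_mono add_mono mult_mono) auto
  finally show "hnorm s (\<lambda>\<xi>. cubic f \<xi> - cubic g \<xi>)
      \<le> 3 * (algebra_const s TYPE('d))^2 * R^2 * hnorm s (\<lambda>x. f x - g x)"
    unfolding D_def by (simp add: power2_eq_square algebra_simps)
qed

lemma H_quintic_lipschitz:
  fixes f g :: "'d::finite fcoef"
  assumes s: "s > real CARD('d) / 2"
    and f: "in_H s f" and g: "in_H s g" and R: "hnorm s f \<le> R" "hnorm s g \<le> R"
  shows "in_H s (\<lambda>\<xi>. quintic f \<xi> - quintic g \<xi>)"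
    "hnorm s (\<lambda>\<xi>. quintic f \<xi> - quintic g \<xi>)
       \<le> 5 * (algebra_const s TYPE('d))^4 * R^4 * hnorm s (\<lambda>x. f x - g x)"
proof -
  define K where "K = algebra_const s TYPE('d)"
  define D where "D = hnorm s (\<lambda>x. f x - g x)"
  have R0: "R \<ge> 0" using R(1) hnorm_nonneg[of s f] by linarith
  have K0: "K \<ge> 0" unfolding K_def by (rule algebra_const_nonneg)
  note cf = H_cubic[OF s f] and cg = H_cubic[OF s g]
  note X = H_trilinear_diff[OF s cf(1) f f cg(1) g g]
  show "in_H s (\<lambda>\<xi>. quintic f \<xi> - quintic g \<xi>)" unfolding quintic_eq_trilinear by (rule X(1))
  have cubic_diff: "hnorm s (\<lambda>x. cubic f x - cubic g x) \<le> 3 * K^2 * R^2 * D"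
    using H_cubic_lipschitz[OF s f g R] unfolding K_def D_def by simp
  have cubic_g: "hnorm s (cubic g) \<le> K^2 * R^3"
    using cg(2) R(2) K0 unfolding K_def[symmetric]
    by (meson hnorm_nonneg mult_left_mono order_trans power_mono zero_le_power)
  have "hnorm s (\<lambda>\<xi>. quintic f \<xi> - quintic g \<xi>)
      \<le> K^2 * (hnorm s (\<lambda>x. cubic f x - cubic g x) * hnorm s f * hnorm s f
          + hnorm s (cubic g) * D * hnorm s f + hnorm s (cubic g) * hnorm s g * D)"
    unfolding quintic_eq_trilinear K_def D_def by (rule X(2))
  also have "\<dots> \<le> K^2 * ((3 * K^2 * R^2 * D) * R * R + (K^2 * R^3) * D * R + (K^2 * R^3) * R * D)"
    using R R0 cubic_diff cubic_g K0 unfolding D_def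
    by (intro mult_left_mono add_mono mult_mono) (auto simp: zero_le_mult_iff)
  finally show "hnorm s (\<lambda>\<xi>. quintic f \<xi> - quintic g \<xi>)
      \<le> 5 * (algebra_const s TYPE('d))^4 * R^4 * hnorm s (\<lambda>x. f x - g x)"
    unfolding K_def[symmetric] D_def[symmetric]
    by (simp add: power2_eq_square power3_eq_cube algebra_simps eval_nat_numeral)
qed

lemma trilinear_cubic_eq_quintic:
  fixes A :: "'d::finite fcoef"
  assumes s: "s > real CARD('d) / 2" and A: "in_H s A"
  shows "trilinear (cubic A) A A = quintic A" "trilinear A (cubic A) A = quintic A"
    "trilinear A A (cubic A) = quintic A"
proof -
  define P where "P = conv A (cconj A)"
  have PH: "in_H s P" unfolding P_def using H_conv[OF s A in_H_cconj[OF A]] by auto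
  have l1: "l1 A" "l1 (cconj A)" "l1 P" using A in_H_cconj[OF A] PH H_imp_l1[OF s] by auto
  have cubic_eq: "cubic A = conv P A" unfolding cubic_def P_def ..
  have "cconj P = P" unfolding P_def cconj_conv by (simp add: conv_comm)
  then have cconj_cubic: "cconj (cubic A) = conv P (cconj A)" unfolding cubic_eq cconj_conv by simp
  show "trilinear (cubic A) A A = quintic A" unfolding quintic_eq_trilinear ..
  have "trilinear A (cubic A) A = conv (conv A (conv P (cconj A))) A"
    unfolding trilinear_def cconj_cubic ..
  also have "conv A (conv P (cconj A)) = conv (conv P A) (cconj A)"
    using l1 by (simp add: conv_assoc[symmetric] conv_comm[of A P])
  finally show "trilinear A (cubic A) A = quintic A" unfolding quintic_def P_def .
  have "trilinear A A (cubic A) = conv P (conv P A)" unfolding trilinear_def cubic_eq P_def ..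
  also have "\<dots> = conv (conv P P) A" using l1 by (simp add: conv_assoc)
  also have "conv P P = conv (conv P A) (cconj A)"
    using l1 by (simp add: conv_assoc P_def[symmetric])
  finally show "trilinear A A (cubic A) = quintic A" unfolding quintic_def P_def .
qed

definition cubic_deriv :: "('d::finite) fcoef \<Rightarrow> 'd fcoef \<Rightarrow> 'd fcoef" where
  "cubic_deriv A B = (\<lambda>\<xi>. trilinear B A A \<xi> + trilinear A B A \<xi> + trilinear A A B \<xi>)"

lemma cubic_deriv_cubic:
  assumes s: "s > real CARD('d) / 2" and A: "in_H s (A :: 'd::finite fcoef)"
  shows "cubic_deriv A (\<lambda>\<xi>. (\<i> * complex_of_real \<sigma>) * cubic A \<xi>) = (\<lambda>\<xi>. (\<i> * complex_of_real \<sigma>) * quintic A \<xi>)"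
  unfolding cubic_deriv_def trilinear_cmult trilinear_cubic_eq_quintic[OF s A]
  by (simp add: algebra_simps)

lemma cubic_taylor2_eq:
  fixes w A B :: "'d::finite fcoef"
  assumes s: "s > real CARD('d) / 2" and H: "in_H s w" "in_H s A"
  defines "D \<equiv> \<lambda>\<xi>. w \<xi> - A \<xi>"
  shows "(\<lambda>\<xi>. cubic w \<xi> - cubic A \<xi> - cubic_deriv A B \<xi>) =
    (\<lambda>\<xi>. (trilinear D w w \<xi> - trilinear B A A \<xi>) + (trilinear A D w \<xi> - trilinear A B A \<xi>)
        + (trilinear A A D \<xi> - trilinear A A B \<xi>))"
proof
  fix \<xi>
  have "trilinear w w w \<xi> - trilinear A A A \<xi> = trilinear D w w \<xi> + trilinear A D w \<xi> + trilinear A A D \<xi>"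
    using fun_cong[OF trilinear_diff[OF s H(1,1,1,2,2,2)], of \<xi>] unfolding D_def by simp
  moreover have "cubic w \<xi> - cubic A \<xi> - cubic_deriv A B \<xi>
      = (trilinear w w w \<xi> - trilinear A A A \<xi>) - (trilinear B A A \<xi> + trilinear A B A \<xi> + trilinear A A B \<xi>)"
    by (simp add: cubic_eq_trilinear cubic_deriv_def)
  ultimately show "cubic w \<xi> - cubic A \<xi> - cubic_deriv A B \<xi> =
    (trilinear D w w \<xi> - trilinear B A A \<xi>) + (trilinear A D w \<xi> - trilinear A B A \<xi>)
      + (trilinear A A D \<xi> - trilinear A A B \<xi>)"
    by (simp add: algebra_simps)
qed

lemma H_cubic_taylor2:
  fixes w A B :: "'d::finite fcoef"
  assumes s: "s > real CARD('d) / 2"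
    and H: "in_H s w" "in_H s A" "in_H s B"
    and R: "hnorm s w \<le> R" "hnorm s A \<le> R"
    and b: "hnorm s (\<lambda>\<xi>. w \<xi> - A \<xi>) \<le> b" and b0: "hnorm s B \<le> b0"
    and e: "hnorm s (\<lambda>\<xi>. w \<xi> - A \<xi> - B \<xi>) \<le> e"
  shows "in_H s (\<lambda>\<xi>. cubic w \<xi> - cubic A \<xi> - cubic_deriv A B \<xi>)"
    "hnorm s (\<lambda>\<xi>. cubic w \<xi> - cubic A \<xi> - cubic_deriv A B \<xi>)
      \<le> (algebra_const s TYPE('d))^2 * (3 * R^2 * e + 3 * R * b0 * b)"
proof -
  define D where "D = (\<lambda>\<xi>. w \<xi> - A \<xi>)"
  have DH: "in_H s D" unfolding D_def by (rule H_diff(1)[OF H(1,2)])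
  have R0: "R \<ge> 0" using R(1) hnorm_nonneg[of s w] by linarith
  have nonneg: "b0 \<ge> 0" "b \<ge> 0" "e \<ge> 0"
    using b0 b e hnorm_nonneg[of s B] hnorm_nonneg[of s "\<lambda>\<xi>. w \<xi> - A \<xi>"]
      hnorm_nonneg[of s "\<lambda>\<xi>. w \<xi> - A \<xi> - B \<xi>"] by linarith+
  note eq = cubic_taylor2_eq[OF s H(1,2), of B, folded D_def]
  have DB: "(\<lambda>x. D x - B x) = (\<lambda>\<xi>. w \<xi> - A \<xi> - B \<xi>)" unfolding D_def ..
  have AA: "(\<lambda>x. A x - A x) = (\<lambda>_. 0)" by simp
  have zero: "hnorm s (\<lambda>_. 0 :: complex) = 0" unfolding hnorm_def by simp
  note X1 = H_trilinear_diff[OF s DH H(1,1,3,2,2)]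
  note X2 = H_trilinear_diff[OF s H(2) DH H(1,2,3,2)]
  note X3 = H_trilinear_diff[OF s H(2,2) DH H(2,2,3)]
  note S12 = H_add[OF X1(1) X2(1)]
  note S123 = H_add[OF S12(1) X3(1)]
  show "in_H s (\<lambda>\<xi>. cubic w \<xi> - cubic A \<xi> - cubic_deriv A B \<xi>)" unfolding eq by (rule S123(1))
  have "hnorm s (\<lambda>\<xi>. trilinear D w w \<xi> - trilinear B A A \<xi>)
      \<le> (algebra_const s TYPE('d))^2 * (e * R * R + b0 * b * R + b0 * R * b)"
    using X1(2) unfolding DB D_def[symmetric]
    by (rule order_trans, intro mult_left_mono add_mono mult_mono)
       (use R b b0 e R0 nonneg in \<open>auto simp: D_def\<close>)
  moreover have "hnorm s (\<lambda>\<xi>. trilinear A D w \<xi> - trilinear A B A \<xi>)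
      \<le> (algebra_const s TYPE('d))^2 * (0 * b * R + R * e * R + R * b0 * b)"
    using X2(2) unfolding DB AA zero D_def[symmetric]
    by (rule order_trans, intro mult_left_mono add_mono mult_mono)
       (use R b b0 e R0 nonneg in \<open>auto simp: D_def\<close>)
  moreover have "hnorm s (\<lambda>\<xi>. trilinear A A D \<xi> - trilinear A A B \<xi>)
      \<le> (algebra_const s TYPE('d))^2 * (0 * R * b + R * 0 * b + R * R * e)"
    using X3(2) unfolding DB AA zero
    by (rule order_trans, intro mult_left_mono add_mono mult_mono)
       (use R b b0 e R0 nonneg in \<open>auto simp: D_def\<close>)
  ultimately show "hnorm s (\<lambda>\<xi>. cubic w \<xi> - cubic A \<xi> - cubic_deriv A B \<xi>)
      \<le> (algebra_const s TYPE('d))^2 * (3 * R^2 * e + 3 * R * b0 * b)"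
    unfolding eq using S123(2) S12(2) by (simp add: power2_eq_square algebra_simps)
qed

section \<open>Free evolution and a mean value inequality\<close>

lemma norm_cis_minus_1_le: "cmod (cis x - 1) \<le> \<bar>x\<bar>"
proof -
  have "cmod (cis x - 1) = 2 * \<bar>sin (x / 2)\<bar>"
    using dist_exp_i_1[of x] by (simp add: cis_conv_exp)
  also have "\<dots> \<le> 2 * \<bar>x / 2\<bar>" using abs_sin_x_le_abs_x[of "x / 2"] by simp
  finally show ?thesis by simp
qed

lemma H_schr_minus_id:
  assumes f: "in_H (r + 2) f"
  shows "in_H r (\<lambda>\<xi>. schr t f \<xi> - f \<xi>)" "hnorm r (\<lambda>\<xi>. schr t f \<xi> - f \<xi>) \<le> \<bar>t\<bar> * hnorm (r + 2) f"
proof -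
  have pointwise: "sqrt (weight r \<xi>) * cmod (schr t f \<xi> - f \<xi>) \<le> \<bar>t\<bar> * (sqrt (weight (r + 2) \<xi>) * cmod (f \<xi>))"
    for \<xi>
  proof -
    have p: "1 + sqn \<xi> > 0" using sqn_nonneg[of \<xi>] by linarith
    have "cmod (schr t f \<xi> - f \<xi>) = cmod (cis (- t * sqn \<xi>) - 1) * cmod (f \<xi>)"
      unfolding schr_def by (simp add: norm_mult[symmetric] algebra_simps)
    also have "\<dots> \<le> \<bar>t\<bar> * (1 + sqn \<xi>) * cmod (f \<xi>)"
    proof (rule mult_right_mono)
      have "cmod (cis (- t * sqn \<xi>) - 1) \<le> \<bar>- t * sqn \<xi>\<bar>" by (rule norm_cis_minus_1_le)
      also have "\<dots> \<le> \<bar>t\<bar> * (1 + sqn \<xi>)" by (simp add: abs_mult mult_left_mono)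
      finally show "cmod (cis (- t * sqn \<xi>) - 1) \<le> \<bar>t\<bar> * (1 + sqn \<xi>)" .
    qed simp
    finally have "sqrt (weight r \<xi>) * cmod (schr t f \<xi> - f \<xi>)
        \<le> sqrt (weight r \<xi>) * (\<bar>t\<bar> * (1 + sqn \<xi>) * cmod (f \<xi>))"
      by (rule mult_left_mono) simp
    also have "\<dots> = \<bar>t\<bar> * ((sqrt (weight r \<xi>) * (1 + sqn \<xi>)) * cmod (f \<xi>))"
      by (simp add: algebra_simps)
    also have "sqrt (weight r \<xi>) * (1 + sqn \<xi>) = sqrt (weight (r + 2) \<xi>)"
      using p by (simp add: weight_def powr_add real_sqrt_mult)
    finally show ?thesis .
  qed
  have L: "L2_set (\<lambda>\<xi>. sqrt (weight r \<xi>) * cmod (schr t f \<xi> - f \<xi>)) F \<le> \<bar>t\<bar> * hnorm (r + 2) f" for F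
  proof -
    have "L2_set (\<lambda>\<xi>. sqrt (weight r \<xi>) * cmod (schr t f \<xi> - f \<xi>)) F
        \<le> L2_set (\<lambda>\<xi>. \<bar>t\<bar> * (sqrt (weight (r + 2) \<xi>) * cmod (f \<xi>))) F"
      by (rule L2_set_mono) (auto intro: pointwise)
    also have "\<dots> = \<bar>t\<bar> * L2_set (\<lambda>\<xi>. sqrt (weight (r + 2) \<xi>) * cmod (f \<xi>)) F"
      by (simp add: L2_set_right_distrib)
    also have "\<dots> \<le> \<bar>t\<bar> * hnorm (r + 2) f" by (intro mult_left_mono L2_set_le_hnorm f) auto
    finally show ?thesis .
  qed
  then show "in_H r (\<lambda>\<xi>. schr t f \<xi> - f \<xi>)"
    "hnorm r (\<lambda>\<xi>. schr t f \<xi> - f \<xi>) \<le> \<bar>t\<bar> * hnorm (r + 2) f"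
    using in_H_hnorm_leI[of "\<bar>t\<bar> * hnorm (r + 2) f" r "\<lambda>\<xi>. schr t f \<xi> - f \<xi>"] by auto
qed

lemma schr_minus_schr: "(\<lambda>\<xi>. schr x a \<xi> - schr y a \<xi>) = schr y (\<lambda>\<xi>. schr (x - y) a \<xi> - a \<xi>)"
  by (simp add: schr_diff schr_schr)

lemma Re_le_of_deriv_le:
  fixes \<Psi> \<Psi>' :: "real \<Rightarrow> complex"
  assumes h: "h \<ge> 0"
    and der: "\<And>\<sigma>. \<sigma> \<in> {0..h} \<Longrightarrow> (\<Psi> has_vector_derivative \<Psi>' \<sigma>) (at \<sigma> within {0..h})"
    and zero: "\<Psi> 0 = 0"
    and le: "\<And>\<sigma>. \<sigma> \<in> {0..h} \<Longrightarrow> Re (\<Psi>' \<sigma>) \<le> c * \<sigma>^k"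
  shows "Re (\<Psi> h) \<le> c * h^(Suc k) / real (Suc k)"
proof -
  have "(\<Psi>' has_integral (\<Psi> h - \<Psi> 0)) {0..h}"
    by (rule fundamental_theorem_of_calculus[OF h der])
  from has_integral_linear[OF this bounded_linear_Re]
  have I: "((Re \<circ> \<Psi>') has_integral Re (\<Psi> h)) {0..h}" using zero by simp
  have J: "((\<lambda>\<sigma>. c * \<sigma>^k) has_integral (c * h^(Suc k) / real (Suc k) - c * 0^(Suc k) / real (Suc k))) {0..h}"
  proof (rule fundamental_theorem_of_calculus[OF h])
    fix \<sigma>
    have "((\<lambda>\<sigma>. c * \<sigma>^(Suc k) / real (Suc k)) has_real_derivative c * (real (Suc k) * \<sigma>^k) / real (Suc k))
        (at \<sigma> within {0..h})"
      by (intro derivative_eq_intros) auto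
    then show "((\<lambda>\<sigma>. c * \<sigma>^(Suc k) / real (Suc k)) has_vector_derivative c * \<sigma>^k) (at \<sigma> within {0..h})"
      by (simp add: has_real_derivative_iff_has_vector_derivative)
  qed
  have "Re (\<Psi> h) \<le> c * h^(Suc k) / real (Suc k) - c * 0^(Suc k) / real (Suc k)"
    by (rule has_integral_le[OF I J]) (use le in auto)
  then show ?thesis by simp
qed

lemma Re_sum_weighted_le:
  "Re (\<Sum>\<xi>\<in>F. complex_of_real (w \<xi>) * cnj (x \<xi>) * y \<xi>)
    \<le> L2_set (\<lambda>\<xi>. sqrt (w \<xi>) * cmod (x \<xi>)) F * L2_set (\<lambda>\<xi>. sqrt (w \<xi>) * cmod (y \<xi>)) F"
  if "\<And>\<xi>. w \<xi> \<ge> 0"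
proof -
  have "Re (\<Sum>\<xi>\<in>F. complex_of_real (w \<xi>) * cnj (x \<xi>) * y \<xi>)
      \<le> (\<Sum>\<xi>\<in>F. \<bar>sqrt (w \<xi>) * cmod (x \<xi>)\<bar> * \<bar>sqrt (w \<xi>) * cmod (y \<xi>)\<bar>)"
    unfolding Re_sum
  proof (rule sum_mono)
    fix \<xi>
    have "Re (complex_of_real (w \<xi>) * cnj (x \<xi>) * y \<xi>) \<le> cmod (complex_of_real (w \<xi>) * cnj (x \<xi>) * y \<xi>)"
      by (rule complex_Re_le_cmod)
    also have "\<dots> = \<bar>sqrt (w \<xi>) * cmod (x \<xi>)\<bar> * \<bar>sqrt (w \<xi>) * cmod (y \<xi>)\<bar>"
      using that[of \<xi>] by (simp add: norm_mult abs_mult)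
    finally show "Re (complex_of_real (w \<xi>) * cnj (x \<xi>) * y \<xi>)
        \<le> \<bar>sqrt (w \<xi>) * cmod (x \<xi>)\<bar> * \<bar>sqrt (w \<xi>) * cmod (y \<xi>)\<bar>" .
  qed
  also have "\<dots> \<le> L2_set (\<lambda>\<xi>. sqrt (w \<xi>) * cmod (x \<xi>)) F * L2_set (\<lambda>\<xi>. sqrt (w \<xi>) * cmod (y \<xi>)) F"
    by (rule L2_set_mult_ineq)
  finally show ?thesis .
qed

text \<open>Testing against the weighted conjugate of \<open>\<phi> h\<close> reduces the vector-valued estimate to the
  scalar one: on a finite set of frequencies, \<open>S\<^sup>2 = Re \<Psi> h \<le> S * c * h\<^bsup>k+1\<^esup> / (k + 1)\<close>.\<close>
lemma H_mean_value_ineq: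
  fixes \<phi> \<phi>' :: "real \<Rightarrow> ('d::finite) fcoef"
  assumes h: "h \<ge> 0" and c: "c \<ge> 0"
    and der: "\<And>\<sigma> \<xi>. \<sigma> \<in> {0..h} \<Longrightarrow> ((\<lambda>\<sigma>. \<phi> \<sigma> \<xi>) has_vector_derivative \<phi>' \<sigma> \<xi>) (at \<sigma> within {0..h})"
    and zero: "\<And>\<xi>. \<phi> 0 \<xi> = 0"
    and bound: "\<And>\<sigma>. \<sigma> \<in> {0..h} \<Longrightarrow> in_H r (\<phi>' \<sigma>) \<and> hnorm r (\<phi>' \<sigma>) \<le> c * \<sigma>^k"
  shows "in_H r (\<phi> h)" "hnorm r (\<phi> h) \<le> c * h^(Suc k) / real (Suc k)"
proof -
  define B where "B = c * h^(Suc k) / real (Suc k)"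
  have B0: "B \<ge> 0" unfolding B_def using h c by simp
  have L: "L2_set (\<lambda>\<xi>. sqrt (weight r \<xi>) * cmod (\<phi> h \<xi>)) F \<le> B" if fin: "finite F" for F
  proof -
    define S where "S = L2_set (\<lambda>\<xi>. sqrt (weight r \<xi>) * cmod (\<phi> h \<xi>)) F"
    have S0: "S \<ge> 0" unfolding S_def by simp
    define \<Psi> where "\<Psi> = (\<lambda>\<sigma>. \<Sum>\<xi>\<in>F. complex_of_real (weight r \<xi>) * cnj (\<phi> h \<xi>) * \<phi> \<sigma> \<xi>)"
    have "Re (\<Psi> h) \<le> S * c * h^(Suc k) / real (Suc k)"
    proof (rule Re_le_of_deriv_le[OF h])
      show "(\<Psi> has_vector_derivative (\<Sum>\<xi>\<in>F. complex_of_real (weight r \<xi>) * cnj (\<phi> h \<xi>) * \<phi>' \<sigma> \<xi>))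
          (at \<sigma> within {0..h})" if "\<sigma> \<in> {0..h}" for \<sigma>
        unfolding \<Psi>_def by (intro has_vector_derivative_sum has_vector_derivative_mult_right der that)
      show "\<Psi> 0 = 0" unfolding \<Psi>_def by (simp add: zero)
      show "Re (\<Sum>\<xi>\<in>F. complex_of_real (weight r \<xi>) * cnj (\<phi> h \<xi>) * \<phi>' \<sigma> \<xi>) \<le> S * c * \<sigma>^k"
        if "\<sigma> \<in> {0..h}" for \<sigma>
      proof -
        have "Re (\<Sum>\<xi>\<in>F. complex_of_real (weight r \<xi>) * cnj (\<phi> h \<xi>) * \<phi>' \<sigma> \<xi>)
            \<le> S * L2_set (\<lambda>\<xi>. sqrt (weight r \<xi>) * cmod (\<phi>' \<sigma> \<xi>)) F"
          unfolding S_def by (rule Re_sum_weighted_le) simp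
        also have "\<dots> \<le> S * (c * \<sigma>^k)"
          using bound[OF that] L2_set_le_hnorm[of r "\<phi>' \<sigma>" F] S0 by (intro mult_left_mono) auto
        finally show ?thesis by (simp add: mult.assoc)
      qed
    qed
    moreover have "Re (\<Psi> h) = S^2"
      unfolding \<Psi>_def S_def sum_weight_eq_L2_set[symmetric] Re_sum
      by (intro sum.cong refl) (simp only: cmod_power2, simp add: algebra_simps power2_eq_square)
    ultimately have "S * S \<le> S * B" unfolding B_def by (simp add: power2_eq_square algebra_simps)
    then have "S \<le> B" using S0 B0 by (cases "S = 0") (auto simp: mult_le_cancel_left)
    then show ?thesis unfolding S_def .
  qed
  then show "in_H r (\<phi> h)" "hnorm r (\<phi> h) \<le> c * h^(Suc k) / real (Suc k)"
    using in_H_hnorm_leI[OF B0 L] unfolding B_def by auto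
qed

section \<open>Behaviour in time\<close>

lemma AE_lborel_ex_in_interval:
  assumes ae: "AE x in lborel. P x" and ab: "a < (b::real)"
  shows "\<exists>x\<in>{a<..<b}. P x"
proof (rule ccontr)
  assume "\<not> (\<exists>x\<in>{a<..<b}. P x)"
  then have sub: "{a<..<b} \<subseteq> {x \<in> space lborel. \<not> P x}" by auto
  from ae obtain N where N: "{x \<in> space lborel. \<not> P x} \<subseteq> N" "emeasure lborel N = 0" "N \<in> sets lborel"
    by (rule AE_E)
  have "emeasure lborel {a<..<b} \<le> emeasure lborel N"
    using sub N by (intro emeasure_mono) auto
  then show False using N(2) ab by simp
qed

lemma continuous_on_le_of_AE_le:
  fixes L :: "real \<Rightarrow> real"
  assumes T: "T > 0" and cont: "continuous_on {0..T} L"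
    and ae: "AE t in lborel. t \<in> {0<..<T} \<longrightarrow> L t \<le> M" and t0: "t0 \<in> {0..T}"
  shows "L t0 \<le> M"
proof (rule ccontr)
  assume "\<not> L t0 \<le> M"
  then have "eventually (\<lambda>t. L t > M) (at t0 within {0..T})"
    using cont t0 by (intro order_tendstoD(1)) (auto simp: continuous_on_def)
  then obtain d where d: "d > 0" "\<And>t. t \<in> {0..T} \<Longrightarrow> t \<noteq> t0 \<Longrightarrow> dist t t0 < d \<Longrightarrow> L t > M"
    unfolding eventually_at by blast
  obtain a b where ab: "a < b" "{a<..<b} \<subseteq> {0<..<T}" "\<And>t. t \<in> {a<..<b} \<Longrightarrow> t \<noteq> t0 \<and> dist t t0 < d"
  proof (cases "t0 < T")
    case True
    show ?thesis
      by (rule that[of t0 "min T (t0 + d)"]) (use True d t0 in \<open>auto simp: dist_real_def\<close>)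
  next
    case False
    then have "t0 = T" using t0 by simp
    show ?thesis
      by (rule that[of "max 0 (T - d)" T]) (use \<open>t0 = T\<close> d T in \<open>auto simp: dist_real_def\<close>)
  qed
  obtain t where t: "t \<in> {a<..<b}" "t \<in> {0<..<T} \<longrightarrow> L t \<le> M"
    using AE_lborel_ex_in_interval[OF ae ab(1)] by blast
  then show False using d(2)[of t] ab(3)[OF t(1)] ab(2) by force
qed

text \<open>Each finite partial sum of the \<open>H\<^sup>r\<close> norm is continuous in \<open>t\<close>, so it inherits the
  almost-everywhere bound at every time.\<close>
lemma H_bound_of_AE_bound:
  fixes v :: "real \<Rightarrow> ('d::finite) fcoef"
  assumes T: "T > 0"
    and cont: "\<And>\<xi>. continuous_on {0..T} (\<lambda>t. v t \<xi>)"
    and ae: "AE t in lborel. t \<in> {0<..<T} \<longrightarrow> in_H r (v t) \<and> hnorm r (v t) \<le> M"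
    and t0: "t0 \<in> {0..T}"
  shows "in_H r (v t0)" "hnorm r (v t0) \<le> M"
proof -
  obtain t1 where "t1 \<in> {0<..<T}" "in_H r (v t1) \<and> hnorm r (v t1) \<le> M"
    using AE_lborel_ex_in_interval[OF ae T] by auto
  then have M: "M \<ge> 0" using hnorm_nonneg[of r "v t1"] by linarith
  have L: "L2_set (\<lambda>\<xi>. sqrt (weight r \<xi>) * cmod (v t0 \<xi>)) F \<le> M" if "finite F" for F
  proof (rule continuous_on_le_of_AE_le[OF T _ _ t0, where L="\<lambda>t. L2_set (\<lambda>\<xi>. sqrt (weight r \<xi>) * cmod (v t \<xi>)) F"])
    show "continuous_on {0..T} (\<lambda>t. L2_set (\<lambda>\<xi>. sqrt (weight r \<xi>) * cmod (v t \<xi>)) F)"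
      unfolding L2_set_def by (intro continuous_intros cont)
    show "AE t in lborel. t \<in> {0<..<T} \<longrightarrow> L2_set (\<lambda>\<xi>. sqrt (weight r \<xi>) * cmod (v t \<xi>)) F \<le> M"
      using ae by eventually_elim (use L2_set_le_hnorm order_trans in blast)
  qed
  show "in_H r (v t0)" "hnorm r (v t0) \<le> M" using in_H_hnorm_leI[OF M L] by auto
qed

lemma has_vector_derivative_cis_linear:
  "((\<lambda>t. cis (t * c)) has_vector_derivative (complex_of_real c * (\<i> * cis (t * c)))) (at t within S)"
proof -
  have "((\<lambda>t. t * c) has_derivative (\<lambda>h. h * c)) (at t within S)"
    by (auto intro!: derivative_eq_intros)
  from has_derivative_cis[OF this]
  show ?thesis unfolding has_vector_derivative_def
    by (simp add: scaleR_conv_of_real algebra_simps)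
qed

lemma has_vector_derivative_interaction:
  assumes u: "nls_solution T u" and t: "t \<in> {0..T}"
  shows "((\<lambda>t. schr (-t) (u t) \<xi>) has_vector_derivative (\<i> * schr (-t) (cubic (u t)) \<xi>)) (at t within {0..T})"
proof -
  obtain D where D: "((\<lambda>s. u s \<xi>) has_vector_derivative D) (at t within {0..T})"
    "\<i> * D - complex_of_real (sqn \<xi>) * u t \<xi> + cubic (u t) \<xi> = 0"
    using u t unfolding nls_solution_def by blast
  have deriv: "((\<lambda>t. cis (t * sqn \<xi>) * u t \<xi>) has_vector_derivative
      (cis (t * sqn \<xi>) * D + complex_of_real (sqn \<xi>) * (\<i> * cis (t * sqn \<xi>)) * u t \<xi>)) (at t within {0..T})"
    by (rule has_vector_derivative_mult[OF has_vector_derivative_cis_linear D(1)])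
  have iD: "\<i> * D = complex_of_real (sqn \<xi>) * u t \<xi> - cubic (u t) \<xi>"
    using D(2) by (simp add: algebra_simps)
  have "D = - \<i> * (\<i> * D)" by simp
  also have "\<dots> = \<i> * cubic (u t) \<xi> - \<i> * (complex_of_real (sqn \<xi>) * u t \<xi>)"
    unfolding iD by (simp add: algebra_simps)
  finally have D_eq: "D = \<i> * cubic (u t) \<xi> - \<i> * (complex_of_real (sqn \<xi>) * u t \<xi>)" .
  have "cis (t * sqn \<xi>) * D + complex_of_real (sqn \<xi>) * (\<i> * cis (t * sqn \<xi>)) * u t \<xi>
      = \<i> * schr (-t) (cubic (u t)) \<xi>"
    unfolding schr_def D_eq by (simp add: algebra_simps)
  with deriv show ?thesis unfolding schr_def by simp
qed

lemma has_vector_derivative_shift_within: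
  assumes "(f has_vector_derivative D) (at (c + \<sigma>) within S)" "(\<lambda>\<sigma>. c + \<sigma>) ` A \<subseteq> S"
  shows "((\<lambda>\<sigma>. f (c + \<sigma>)) has_vector_derivative D) (at \<sigma> within A)"
proof -
  have "((\<lambda>\<sigma>. c + \<sigma>) has_vector_derivative 1) (at \<sigma> within A)"
    by (auto intro!: derivative_eq_intros)
  moreover have "(f has_vector_derivative D) (at ((\<lambda>\<sigma>. c + \<sigma>) \<sigma>) within (\<lambda>\<sigma>. c + \<sigma>) ` A)"
    using has_vector_derivative_within_subset[OF assms] by simp
  ultimately show ?thesis using vector_diff_chain_within[of "\<lambda>\<sigma>. c + \<sigma>" 1 \<sigma> A f D] by (simp add: o_def)
qed

lemma continuous_on_coef_schr_lipschitz:
  fixes N :: "'d::finite fcoef \<Rightarrow> 'd fcoef"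
  assumes s: "s \<ge> 0" and a: "in_H (s + 2) a"
    and N: "\<And>f g. in_H s f \<Longrightarrow> in_H s g \<Longrightarrow> hnorm s f \<le> hnorm s a \<Longrightarrow> hnorm s g \<le> hnorm s a \<Longrightarrow>
      in_H s (\<lambda>\<xi>. N f \<xi> - N g \<xi>) \<and> hnorm s (\<lambda>\<xi>. N f \<xi> - N g \<xi>) \<le> L * hnorm s (\<lambda>\<xi>. f \<xi> - g \<xi>)"
    and L: "L \<ge> 0"
  shows "continuous_on A (\<lambda>\<sigma>. N (schr \<sigma> a) \<xi>)"
proof -
  have aH: "in_H s a" using H_mono[OF a] by simp
  have "(L * hnorm (s + 2) a)-lipschitz_on A (\<lambda>\<sigma>. N (schr \<sigma> a) \<xi>)"
  proof (rule lipschitz_onI)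
    fix x y
    have "dist (N (schr x a) \<xi>) (N (schr y a) \<xi>) = cmod ((\<lambda>\<xi>. N (schr x a) \<xi> - N (schr y a) \<xi>) \<xi>)"
      by (simp add: dist_norm)
    also have "\<dots> \<le> hnorm s (\<lambda>\<xi>. N (schr x a) \<xi> - N (schr y a) \<xi>)"
      using N[of "schr x a" "schr y a"] aH by (intro norm_coef_le_hnorm s) auto
    also have "\<dots> \<le> L * hnorm s (\<lambda>\<xi>. schr x a \<xi> - schr y a \<xi>)"
      using N[of "schr x a" "schr y a"] aH by auto
    also have "\<dots> \<le> L * (\<bar>x - y\<bar> * hnorm (s + 2) a)"
      unfolding schr_minus_schr using H_schr_minus_id[OF a, of "x - y"] L
      by (intro mult_left_mono) auto
    finally show "dist (N (schr x a) \<xi>) (N (schr y a) \<xi>) \<le> L * hnorm (s + 2) a * dist x y"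
      by (simp add: dist_real_def algebra_simps)
  qed (use L in simp)
  then show ?thesis by (rule lipschitz_on_continuous_on)
qed

section \<open>One step of the scheme\<close>

text \<open>The algebra constants \<open>K\<close>, \<open>K2\<close> are parameters, so that the constants \<open>C1\<close>--\<open>C4\<close> defined
  below depend only on \<open>R\<close>, \<open>K\<close>, \<open>K2\<close> and not on \<open>T\<close>, \<open>\<tau>\<close>, \<open>n\<close> or \<open>u\<close>.\<close>
locale nls_step =
  fixes s R K K2 T \<tau> :: real and n :: nat and u :: "real \<Rightarrow> 'd::finite fcoef"
  assumes s_gt: "s > real CARD('d) / 2"
    and K_def: "K = algebra_const s TYPE('d)"
    and K2_def: "K2 = algebra_const (s + 2) TYPE('d)"
    and tau_nonneg: "\<tau> \<ge> 0"
    and step_le: "real (Suc n) * \<tau> \<le> T"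
    and solution: "nls_solution T u"
    and bound: "\<And>t. t \<in> {0..T} \<Longrightarrow> in_H (s + 2) (schr (-t) (u t)) \<and> hnorm (s + 2) (schr (-t) (u t)) \<le> R"
begin

definition tn :: real where "tn = real n * \<tau>"

definition v :: "real \<Rightarrow> 'd fcoef" where "v t = schr (-t) (u t)"

definition vderiv :: "real \<Rightarrow> 'd fcoef" where "vderiv t = (\<lambda>\<xi>. \<i> * schr (-t) (cubic (u t)) \<xi>)"

definition free :: "real \<Rightarrow> 'd fcoef" where "free \<sigma> = schr \<sigma> (u tn)"

definition pert :: "real \<Rightarrow> 'd fcoef" where "pert \<sigma> = schr (tn + \<sigma>) (\<lambda>\<xi>. v (tn + \<sigma>) \<xi> - v tn \<xi>)"

definition C1 :: real where "C1 = K^2 * R^3"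
definition C2 :: real where "C2 = 3 * K^2 * R^2 * (C1 + R) + K2^2 * R^3"
definition C3 :: real where "C3 = C2 / 2 + K2^2 * R^3 + 3 * K^2 * R^3"
definition C4 :: real where "C4 = K^2 * (3 * R^2 * C3 + 3 * R * K^2 * R^3 * C1)"

lemma s_nonneg: "s \<ge> 0"
  using s_gt of_nat_0_le_iff[of "CARD('d)"] by linarith

lemma tn_add_in_interval: "\<sigma> \<in> {0..\<tau>} \<Longrightarrow> tn + \<sigma> \<in> {0..T}"
  using step_le tau_nonneg unfolding tn_def by (auto simp: algebra_simps)

lemma tn_in_interval: "tn \<in> {0..T}"
  using tn_add_in_interval[of 0] tau_nonneg by simp

lemma u_eq: "u t = schr t (v t)"
  unfolding v_def schr_schr by simp

lemma u_bound:
  assumes "t \<in> {0..T}"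
  shows "in_H (s + 2) (u t)" "hnorm (s + 2) (u t) \<le> R" "in_H s (u t)" "hnorm s (u t) \<le> R"
  using bound[OF assms] H_mono[of "s + 2" "v t" s] unfolding u_eq[of t] v_def[symmetric] by auto

lemma free_bound:
  "in_H (s + 2) (free \<sigma>)" "hnorm (s + 2) (free \<sigma>) \<le> R" "in_H s (free \<sigma>)" "hnorm s (free \<sigma>) \<le> R"
  using u_bound[OF tn_in_interval] tau_nonneg unfolding free_def by auto

lemma constants_nonneg: "R \<ge> 0" "K \<ge> 0" "K2 \<ge> 0" "C1 \<ge> 0" "C2 \<ge> 0" "C3 \<ge> 0" "C4 \<ge> 0"
proof -
  show R: "R \<ge> 0" using free_bound(2)[of 0] hnorm_nonneg[of "s + 2" "free 0"] by linarith
  show K: "K \<ge> 0" "K2 \<ge> 0" unfolding K_def K2_def by (simp_all add: algebra_const_nonneg)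
  show "C1 \<ge> 0" "C2 \<ge> 0" "C3 \<ge> 0" "C4 \<ge> 0"
    unfolding C1_def C2_def C3_def C4_def using R K by simp_all
qed

lemma cubic_bound:
  fixes f :: "'d fcoef"
  assumes "in_H s f" "hnorm s f \<le> R"
  shows "in_H s (cubic f)" "hnorm s (cubic f) \<le> K^2 * R^3"
proof -
  note c = H_cubic[OF s_gt assms(1)]
  show "in_H s (cubic f)" by (rule c(1))
  have "(hnorm s f)^3 \<le> R^3" using assms(2) by (intro power_mono) auto
  with c(2) show "hnorm s (cubic f) \<le> K^2 * R^3"
    unfolding K_def by (meson mult_left_mono order_trans zero_le_power2)
qed

lemma cubic_bound2:
  fixes f :: "'d fcoef"
  assumes "in_H (s + 2) f" "hnorm (s + 2) f \<le> R"
  shows "in_H (s + 2) (cubic f)" "hnorm (s + 2) (cubic f) \<le> K2^2 * R^3"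
proof -
  have "s + 2 > real CARD('d) / 2" using s_gt by simp
  note c = H_cubic[OF this assms(1)]
  show "in_H (s + 2) (cubic f)" by (rule c(1))
  have "(hnorm (s + 2) f)^3 \<le> R^3" using assms(2) by (intro power_mono) auto
  with c(2) show "hnorm (s + 2) (cubic f) \<le> K2^2 * R^3"
    unfolding K2_def by (meson mult_left_mono order_trans zero_le_power2)
qed

lemma free_minus_u_tn:
  assumes "\<sigma> \<ge> 0"
  shows "in_H s (\<lambda>\<xi>. free \<sigma> \<xi> - u tn \<xi>)" "hnorm s (\<lambda>\<xi>. free \<sigma> \<xi> - u tn \<xi>) \<le> \<sigma> * R"
  using H_schr_minus_id[OF u_bound(1)[OF tn_in_interval], of \<sigma>] u_bound(2)[OF tn_in_interval] assms tau_nonneg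
  unfolding free_def by (auto intro: order_trans mult_left_mono)

lemma vderiv_bound:
  assumes "t \<in> {0..T}"
  shows "in_H s (vderiv t)" "hnorm s (vderiv t) \<le> C1"
  using H_cmult[of s "schr (-t) (cubic (u t))" \<i>] cubic_bound[OF u_bound(3,4)[OF assms]]
  unfolding vderiv_def C1_def by auto

lemma has_vector_derivative_v:
  assumes "\<sigma> \<in> {0..h}" "h \<le> \<tau>"
  shows "((\<lambda>\<sigma>. v (tn + \<sigma>) \<xi>) has_vector_derivative vderiv (tn + \<sigma>) \<xi>) (at \<sigma> within {0..h})"
proof (rule has_vector_derivative_shift_within)
  show "((\<lambda>t. v t \<xi>) has_vector_derivative vderiv (tn + \<sigma>) \<xi>) (at (tn + \<sigma>) within {0..T})"
    unfolding v_def vderiv_def using assms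
    by (intro has_vector_derivative_interaction[OF solution] tn_add_in_interval) auto
  show "(\<lambda>\<sigma>. tn + \<sigma>) ` {0..h} \<subseteq> {0..T}"
  proof (rule image_subsetI)
    fix r assume "r \<in> {0..h}"
    with assms(2) show "tn + r \<in> {0..T}" by (intro tn_add_in_interval) auto
  qed
qed

lemma increment_bound:
  assumes "\<sigma> \<in> {0..\<tau>}"
  shows "in_H s (\<lambda>\<xi>. v (tn + \<sigma>) \<xi> - v tn \<xi>)" "hnorm s (\<lambda>\<xi>. v (tn + \<sigma>) \<xi> - v tn \<xi>) \<le> C1 * \<sigma>"
proof -
  have "((\<lambda>\<sigma>. v (tn + \<sigma>) \<xi> - v tn \<xi>) has_vector_derivative vderiv (tn + r) \<xi>) (at r within {0..\<sigma>})"
    if "r \<in> {0..\<sigma>}" for r \<xi>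
    using has_vector_derivative_v[OF that, of \<xi>] assms by (simp add: has_vector_derivative_diff_const)
  moreover have "in_H s (vderiv (tn + r)) \<and> hnorm s (vderiv (tn + r)) \<le> C1 * r^0" if "r \<in> {0..\<sigma>}" for r
    using vderiv_bound[OF tn_add_in_interval, of r] that assms by auto
  ultimately show "in_H s (\<lambda>\<xi>. v (tn + \<sigma>) \<xi> - v tn \<xi>)" "hnorm s (\<lambda>\<xi>. v (tn + \<sigma>) \<xi> - v tn \<xi>) \<le> C1 * \<sigma>"
    using H_mean_value_ineq[of \<sigma> C1 "\<lambda>\<sigma> \<xi>. v (tn + \<sigma>) \<xi> - v tn \<xi>" "\<lambda>r. vderiv (tn + r)" s 0]
      assms constants_nonneg(4) by auto
qed

lemma pert_bound:
  assumes "\<sigma> \<in> {0..\<tau>}"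
  shows "in_H s (pert \<sigma>)" "hnorm s (pert \<sigma>) \<le> C1 * \<sigma>"
  using increment_bound[OF assms] unfolding pert_def by auto

lemma schr_v_tn: "schr (tn + \<sigma>) (v tn) = free \<sigma>"
  unfolding free_def u_eq[of tn] schr_schr by (simp add: add.commute)

lemma u_eq_free_plus_pert: "u (tn + \<sigma>) = (\<lambda>\<xi>. free \<sigma> \<xi> + pert \<sigma> \<xi>)"
  unfolding pert_def schr_diff u_eq[of "tn + \<sigma>"] schr_v_tn by auto

lemma vderiv_lipschitz:
  assumes r: "r \<in> {0..\<tau>}"
  shows "in_H s (\<lambda>\<xi>. vderiv (tn + r) \<xi> - vderiv tn \<xi>)"
    "hnorm s (\<lambda>\<xi>. vderiv (tn + r) \<xi> - vderiv tn \<xi>) \<le> C2 * r"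
proof -
  have r0: "r \<ge> 0" using r by simp
  note U = u_bound[OF tn_in_interval] and Ur = u_bound[OF tn_add_in_interval[OF r]]
  have le: "cmod (u (tn + r) \<xi> - u tn \<xi>) \<le> 1 * cmod (pert r \<xi>) + 1 * cmod (free r \<xi> - u tn \<xi>)" for \<xi>
    unfolding u_eq_free_plus_pert using norm_triangle_ineq[of "pert r \<xi>" "free r \<xi> - u tn \<xi>"]
    by (simp add: algebra_simps)
  note X = H_dominated2[OF pert_bound(1)[OF r] free_minus_u_tn(1)[OF r0] zero_le_one zero_le_one le]
  have dU: "in_H s (\<lambda>\<xi>. u (tn + r) \<xi> - u tn \<xi>)" "hnorm s (\<lambda>\<xi>. u (tn + r) \<xi> - u tn \<xi>) \<le> C1 * r + r * R"
    using X pert_bound(2)[OF r] free_minus_u_tn(2)[OF r0] by auto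
  define D where "D = (\<lambda>\<xi>. cubic (u (tn + r)) \<xi> - schr r (cubic (u tn)) \<xi>)"
  note cl = H_cubic_lipschitz[OF s_gt Ur(3) U(3) Ur(4) U(4)]
  note sm = H_schr_minus_id[OF cubic_bound2(1)[OF U(1,2)], of r]
  have "in_H s D \<and> hnorm s D \<le> 3 * K^2 * R^2 * (C1 * r + r * R) + r * (K2^2 * R^3)"
  proof -
    have le: "cmod (D \<xi>) \<le> 1 * cmod (cubic (u (tn + r)) \<xi> - cubic (u tn) \<xi>)
        + 1 * cmod (schr r (cubic (u tn)) \<xi> - cubic (u tn) \<xi>)" for \<xi>
      unfolding D_def
      using norm_triangle_ineq4[of "cubic (u (tn + r)) \<xi> - cubic (u tn) \<xi>" "schr r (cubic (u tn)) \<xi> - cubic (u tn) \<xi>"]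
      by simp
    have "3 * K^2 * R^2 * hnorm s (\<lambda>\<xi>. u (tn + r) \<xi> - u tn \<xi>) \<le> 3 * K^2 * R^2 * (C1 * r + r * R)"
      using dU(2) by (intro mult_left_mono) auto
    moreover have "\<bar>r\<bar> * hnorm (s + 2) (cubic (u tn)) \<le> r * (K2^2 * R^3)"
      using cubic_bound2(2)[OF U(1,2)] r0 tau_nonneg by (simp add: mult_left_mono)
    ultimately show ?thesis
      using H_dominated2[OF cl(1) sm(1) _ _ le] cl(2) sm(2) unfolding K_def[symmetric] by auto
  qed
  moreover have "(\<lambda>\<xi>. vderiv (tn + r) \<xi> - vderiv tn \<xi>) = (\<lambda>\<xi>. \<i> * schr (-(tn + r)) D \<xi>)"
    unfolding vderiv_def D_def schr_diff by (simp add: schr_schr algebra_simps)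
  ultimately show "in_H s (\<lambda>\<xi>. vderiv (tn + r) \<xi> - vderiv tn \<xi>)"
    "hnorm s (\<lambda>\<xi>. vderiv (tn + r) \<xi> - vderiv tn \<xi>) \<le> C2 * r"
    using H_cmult[of s "schr (-(tn + r)) D" \<i>] unfolding C2_def by (auto simp: algebra_simps)
qed

lemma increment_taylor:
  assumes "\<sigma> \<in> {0..\<tau>}"
  shows "in_H s (\<lambda>\<xi>. v (tn + \<sigma>) \<xi> - v tn \<xi> - \<sigma> * vderiv tn \<xi>)"
    "hnorm s (\<lambda>\<xi>. v (tn + \<sigma>) \<xi> - v tn \<xi> - \<sigma> * vderiv tn \<xi>) \<le> C2 * \<sigma>^2 / 2"
proof -
  have lin: "((\<lambda>\<sigma>. \<sigma> * vderiv tn \<xi>) has_vector_derivative vderiv tn \<xi>) (at r within S)" for r \<xi> S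
  proof -
    have "((\<lambda>\<sigma>. \<sigma> *\<^sub>R vderiv tn \<xi>) has_vector_derivative (r *\<^sub>R 0 + 1 *\<^sub>R vderiv tn \<xi>)) (at r within S)"
      by (rule has_vector_derivative_scaleR[OF DERIV_ident has_vector_derivative_const])
    then show ?thesis by (simp add: scaleR_conv_of_real)
  qed
  have "((\<lambda>\<sigma>. v (tn + \<sigma>) \<xi> - v tn \<xi> - \<sigma> * vderiv tn \<xi>) has_vector_derivative
      vderiv (tn + r) \<xi> - vderiv tn \<xi>) (at r within {0..\<sigma>})"
    if "r \<in> {0..\<sigma>}" for r \<xi>
    using has_vector_derivative_diff[OF has_vector_derivative_v[OF that, of \<xi>, THEN has_vector_derivative_diff_const[THEN iffD2]] lin]
      assms by simp
  moreover have "in_H s (\<lambda>\<xi>. vderiv (tn + r) \<xi> - vderiv tn \<xi>) \<and>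
      hnorm s (\<lambda>\<xi>. vderiv (tn + r) \<xi> - vderiv tn \<xi>) \<le> C2 * r^1" if "r \<in> {0..\<sigma>}" for r
    using vderiv_lipschitz[of r] that assms by auto
  ultimately show "in_H s (\<lambda>\<xi>. v (tn + \<sigma>) \<xi> - v tn \<xi> - \<sigma> * vderiv tn \<xi>)"
    "hnorm s (\<lambda>\<xi>. v (tn + \<sigma>) \<xi> - v tn \<xi> - \<sigma> * vderiv tn \<xi>) \<le> C2 * \<sigma>^2 / 2"
    using H_mean_value_ineq[of \<sigma> C2 "\<lambda>\<sigma> \<xi>. v (tn + \<sigma>) \<xi> - v tn \<xi> - \<sigma> * vderiv tn \<xi>"
        "\<lambda>r \<xi>. vderiv (tn + r) \<xi> - vderiv tn \<xi>" s 1]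
      assms constants_nonneg(5) by (auto simp: numeral_2_eq_2)
qed

lemma schr_cubic_commutator:
  assumes \<sigma>0: "\<sigma> \<ge> 0"
  shows "in_H s (\<lambda>\<xi>. schr \<sigma> (cubic (u tn)) \<xi> - cubic (free \<sigma>) \<xi>)"
    "hnorm s (\<lambda>\<xi>. schr \<sigma> (cubic (u tn)) \<xi> - cubic (free \<sigma>) \<xi>) \<le> \<sigma> * (K2^2 * R^3 + 3 * K^2 * R^3)"
proof -
  note U = u_bound[OF tn_in_interval]
  note sm = H_schr_minus_id[OF cubic_bound2(1)[OF U(1,2)], of \<sigma>]
  note cl = H_cubic_lipschitz[OF s_gt free_bound(3) U(3) free_bound(4) U(4), of \<sigma>]
  have le: "cmod (schr \<sigma> (cubic (u tn)) \<xi> - cubic (free \<sigma>) \<xi>)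
      \<le> 1 * cmod (schr \<sigma> (cubic (u tn)) \<xi> - cubic (u tn) \<xi>) + 1 * cmod (cubic (free \<sigma>) \<xi> - cubic (u tn) \<xi>)" for \<xi>
    using norm_triangle_ineq4[of "schr \<sigma> (cubic (u tn)) \<xi> - cubic (u tn) \<xi>" "cubic (free \<sigma>) \<xi> - cubic (u tn) \<xi>"]
    by simp
  note X = H_dominated2[OF sm(1) cl(1) zero_le_one zero_le_one le]
  show "in_H s (\<lambda>\<xi>. schr \<sigma> (cubic (u tn)) \<xi> - cubic (free \<sigma>) \<xi>)" by (rule X(1))
  have "\<bar>\<sigma>\<bar> * hnorm (s + 2) (cubic (u tn)) \<le> \<sigma> * (K2^2 * R^3)"
    using cubic_bound2(2)[OF U(1,2)] \<sigma>0 by (simp add: mult_left_mono)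
  moreover have "3 * K^2 * R^2 * hnorm s (\<lambda>\<xi>. free \<sigma> \<xi> - u tn \<xi>) \<le> 3 * K^2 * R^2 * (\<sigma> * R)"
    using free_minus_u_tn(2)[OF \<sigma>0] by (intro mult_left_mono) auto
  ultimately show "hnorm s (\<lambda>\<xi>. schr \<sigma> (cubic (u tn)) \<xi> - cubic (free \<sigma>) \<xi>) \<le> \<sigma> * (K2^2 * R^3 + 3 * K^2 * R^3)"
    using X(2) sm(2) cl(2) unfolding K_def[symmetric] by (simp add: power2_eq_square power3_eq_cube algebra_simps)
qed

lemma pert_approx:
  assumes \<sigma>: "\<sigma> \<in> {0..\<tau>}"
  shows "in_H s (\<lambda>\<xi>. pert \<sigma> \<xi> - (\<i> * \<sigma>) * cubic (free \<sigma>) \<xi>)"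
    "hnorm s (\<lambda>\<xi>. pert \<sigma> \<xi> - (\<i> * \<sigma>) * cubic (free \<sigma>) \<xi>) \<le> C3 * \<sigma>^2"
proof -
  have \<sigma>0: "\<sigma> \<ge> 0" using \<sigma> by simp
  define Y where "Y = (\<lambda>\<xi>. schr \<sigma> (cubic (u tn)) \<xi> - cubic (free \<sigma>) \<xi>)"
  have "schr (tn + \<sigma>) (vderiv tn) = (\<lambda>\<xi>. \<i> * schr \<sigma> (cubic (u tn)) \<xi>)"
    unfolding vderiv_def schr_cmult schr_schr by simp
  then have eq: "pert \<sigma> \<xi> - (\<i> * \<sigma>) * cubic (free \<sigma>) \<xi> =
      schr (tn + \<sigma>) (\<lambda>\<xi>. v (tn + \<sigma>) \<xi> - v tn \<xi> - \<sigma> * vderiv tn \<xi>) \<xi> + (\<i> * \<sigma>) * Y \<xi>" for \<xi>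
    unfolding pert_def Y_def schr_diff schr_cmult by (simp add: fun_eq_iff algebra_simps)
  have Z: "in_H s (schr (tn + \<sigma>) (\<lambda>\<xi>. v (tn + \<sigma>) \<xi> - v tn \<xi> - \<sigma> * vderiv tn \<xi>))"
    "hnorm s (schr (tn + \<sigma>) (\<lambda>\<xi>. v (tn + \<sigma>) \<xi> - v tn \<xi> - \<sigma> * vderiv tn \<xi>)) \<le> C2 * \<sigma>^2 / 2"
    using increment_taylor[OF \<sigma>] by simp_all
  have Y: "in_H s Y" "hnorm s Y \<le> \<sigma> * (K2^2 * R^3 + 3 * K^2 * R^3)"
    using schr_cubic_commutator[OF \<sigma>0] unfolding Y_def by auto
  have le: "cmod (pert \<sigma> \<xi> - (\<i> * \<sigma>) * cubic (free \<sigma>) \<xi>)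
      \<le> 1 * cmod (schr (tn + \<sigma>) (\<lambda>\<xi>. v (tn + \<sigma>) \<xi> - v tn \<xi> - \<sigma> * vderiv tn \<xi>) \<xi>) + \<sigma> * cmod (Y \<xi>)" for \<xi>
    unfolding eq using norm_triangle_ineq[of _ "(\<i> * \<sigma>) * Y \<xi>"] \<sigma>0 by (simp add: norm_mult del: norm_schr)
  note X = H_dominated2[OF Z(1) Y(1) zero_le_one \<sigma>0 le]
  show "in_H s (\<lambda>\<xi>. pert \<sigma> \<xi> - (\<i> * \<sigma>) * cubic (free \<sigma>) \<xi>)" by (rule X(1))
  have "\<sigma> * hnorm s Y \<le> \<sigma> * (\<sigma> * (K2^2 * R^3 + 3 * K^2 * R^3))"
    using Y(2) \<sigma>0 by (rule mult_left_mono)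
  with X(2) Z(2) have "hnorm s (\<lambda>\<xi>. pert \<sigma> \<xi> - (\<i> * \<sigma>) * cubic (free \<sigma>) \<xi>)
      \<le> C2 * \<sigma>^2 / 2 + \<sigma> * (\<sigma> * (K2^2 * R^3 + 3 * K^2 * R^3))"
    by linarith
  also have "\<dots> = C3 * \<sigma>^2"
    unfolding C3_def by (simp add: power2_eq_square power3_eq_cube algebra_simps)
  finally show "hnorm s (\<lambda>\<xi>. pert \<sigma> \<xi> - (\<i> * \<sigma>) * cubic (free \<sigma>) \<xi>) \<le> C3 * \<sigma>^2" .
qed

definition defect :: "real \<Rightarrow> 'd fcoef" where
  "defect \<sigma> = (\<lambda>\<xi>. cubic (u (tn + \<sigma>)) \<xi> - cubic (free \<sigma>) \<xi>
      - cubic_deriv (free \<sigma>) (\<lambda>\<xi>. (\<i> * \<sigma>) * cubic (free \<sigma>) \<xi>) \<xi>)"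

lemma defect_bound:
  assumes \<sigma>: "\<sigma> \<in> {0..\<tau>}"
  shows "in_H s (defect \<sigma>)" "hnorm s (defect \<sigma>) \<le> C4 * \<sigma>^2"
proof -
  have \<sigma>0: "\<sigma> \<ge> 0" using \<sigma> by simp
  note w = u_bound(3,4)[OF tn_add_in_interval[OF \<sigma>]]
  have w_minus_free: "(\<lambda>\<xi>. u (tn + \<sigma>) \<xi> - free \<sigma> \<xi>) = pert \<sigma>"
    unfolding u_eq_free_plus_pert by simp
  note cA = cubic_bound[OF free_bound(3,4)[of \<sigma>]]
  note Bc = H_cmult[OF cA(1), of "\<i> * \<sigma>"]
  have B: "in_H s (\<lambda>\<xi>. (\<i> * \<sigma>) * cubic (free \<sigma>) \<xi>)"
    "hnorm s (\<lambda>\<xi>. (\<i> * \<sigma>) * cubic (free \<sigma>) \<xi>) \<le> \<sigma> * (K^2 * R^3)"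
    using Bc(1) order_trans[OF Bc(2) mult_left_mono[OF cA(2)]] \<sigma>0 by (simp_all add: norm_mult)
  have b: "hnorm s (\<lambda>\<xi>. u (tn + \<sigma>) \<xi> - free \<sigma> \<xi>) \<le> C1 * \<sigma>"
    unfolding w_minus_free by (rule pert_bound(2)[OF \<sigma>])
  have e: "hnorm s (\<lambda>\<xi>. u (tn + \<sigma>) \<xi> - free \<sigma> \<xi> - (\<i> * \<sigma>) * cubic (free \<sigma>) \<xi>) \<le> C3 * \<sigma>^2"
    using pert_approx(2)[OF \<sigma>] unfolding u_eq_free_plus_pert by simp
  note T = H_cubic_taylor2[OF s_gt w(1) free_bound(3) B(1) w(2) free_bound(4) b B(2) e]
  show "in_H s (defect \<sigma>)" unfolding defect_def by (rule T(1))
  have "hnorm s (defect \<sigma>) \<le> K^2 * (3 * R^2 * (C3 * \<sigma>^2) + 3 * R * (\<sigma> * (K^2 * R^3)) * (C1 * \<sigma>))"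
    using T(2) unfolding defect_def K_def[symmetric] .
  also have "\<dots> = C4 * \<sigma>^2" unfolding C4_def by (simp add: power2_eq_square algebra_simps)
  finally show "hnorm s (defect \<sigma>) \<le> C4 * \<sigma>^2" .
qed

definition remainder :: "real \<Rightarrow> 'd fcoef" where
  "remainder h = (\<lambda>\<xi>. v (tn + h) \<xi> - v tn \<xi>
      - \<i> * integral {0..h} (\<lambda>r. schr (-(tn + r)) (cubic (free r)) \<xi>)
      + integral {0..h} (\<lambda>r. r * schr (-(tn + r)) (quintic (free r)) \<xi>))"

lemma R4_eq_remainder: "R4 \<tau> n (\<lambda>t. schr (-t) (u t)) = remainder \<tau>"
proof -
  have "real (Suc n) * \<tau> = tn + \<tau>" unfolding tn_def by (simp add: algebra_simps)
  then show ?thesis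
    unfolding R4_def I1_def I2_def remainder_def v_def[symmetric] tn_def[symmetric] schr_v_tn
    by (simp add: fun_eq_iff)
qed

lemma continuous_on_nonlinear_free:
  "continuous_on A (\<lambda>r. cubic (free r) \<xi>)" "continuous_on A (\<lambda>r. quintic (free r) \<xi>)"
proof -
  note U = u_bound[OF tn_in_interval]
  show "continuous_on A (\<lambda>r. cubic (free r) \<xi>)"
    unfolding free_def
    by (rule continuous_on_coef_schr_lipschitz[OF s_nonneg U(1), where L="3 * K^2 * (hnorm s (u tn))^2"])
       (use H_cubic_lipschitz[OF s_gt] constants_nonneg(2) in \<open>auto simp: K_def\<close>)
  show "continuous_on A (\<lambda>r. quintic (free r) \<xi>)"
    unfolding free_def
    by (rule continuous_on_coef_schr_lipschitz[OF s_nonneg U(1), where L="5 * K^4 * (hnorm s (u tn))^4"])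
       (use H_quintic_lipschitz[OF s_gt] constants_nonneg(2) in \<open>auto simp: K_def\<close>)
qed

lemma has_vector_derivative_remainder:
  assumes \<sigma>: "\<sigma> \<in> {0..\<tau>}"
  shows "((\<lambda>h. remainder h \<xi>) has_vector_derivative schr (-(tn + \<sigma>)) (\<lambda>\<xi>. \<i> * defect \<sigma> \<xi>) \<xi>)
    (at \<sigma> within {0..\<tau>})"
proof -
  have cont: "continuous_on {0..\<tau>} (\<lambda>r. schr (-(tn + r)) (cubic (free r)) \<xi>)"
    "continuous_on {0..\<tau>} (\<lambda>r. r * schr (-(tn + r)) (quintic (free r)) \<xi>)"
    unfolding schr_def by (intro continuous_intros continuous_on_nonlinear_free)+
  have "((\<lambda>h. remainder h \<xi>) has_vector_derivative
      vderiv (tn + \<sigma>) \<xi> - \<i> * schr (-(tn + \<sigma>)) (cubic (free \<sigma>)) \<xi>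
        + \<sigma> * schr (-(tn + \<sigma>)) (quintic (free \<sigma>)) \<xi>) (at \<sigma> within {0..\<tau>})"
    unfolding remainder_def
    by (intro has_vector_derivative_add has_vector_derivative_diff has_vector_derivative_mult_right
        has_vector_derivative_v[OF \<sigma> order_refl] integral_has_vector_derivative cont \<sigma>
        has_vector_derivative_diff_const[THEN iffD2])
  moreover have "vderiv (tn + \<sigma>) \<xi> - \<i> * schr (-(tn + \<sigma>)) (cubic (free \<sigma>)) \<xi>
        + \<sigma> * schr (-(tn + \<sigma>)) (quintic (free \<sigma>)) \<xi>
      = schr (-(tn + \<sigma>)) (\<lambda>\<xi>. \<i> * defect \<sigma> \<xi>) \<xi>"
    unfolding vderiv_def defect_def cubic_deriv_cubic[OF s_gt free_bound(3)] schr_def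
    by (simp add: algebra_simps)
  ultimately show ?thesis by simp
qed

lemma remainder_bound: "in_H s (remainder \<tau>)" "hnorm s (remainder \<tau>) \<le> C4 / 3 * \<tau>^3"
proof -
  have "in_H s (schr (-(tn + \<sigma>)) (\<lambda>\<xi>. \<i> * defect \<sigma> \<xi>)) \<and>
      hnorm s (schr (-(tn + \<sigma>)) (\<lambda>\<xi>. \<i> * defect \<sigma> \<xi>)) \<le> C4 * \<sigma>^2" if "\<sigma> \<in> {0..\<tau>}" for \<sigma>
    using H_cmult[OF defect_bound(1)[OF that], of \<i>] defect_bound(2)[OF that] by auto
  moreover have "remainder 0 \<xi> = 0" for \<xi> unfolding remainder_def by simp
  ultimately show "in_H s (remainder \<tau>)" "hnorm s (remainder \<tau>) \<le> C4 / 3 * \<tau>^3"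
    using H_mean_value_ineq[of \<tau> C4 remainder "\<lambda>\<sigma>. schr (-(tn + \<sigma>)) (\<lambda>\<xi>. \<i> * defect \<sigma> \<xi>)" s 2]
      tau_nonneg constants_nonneg(7) has_vector_derivative_remainder by (auto simp: eval_nat_numeral)
qed

end

theorem lemma3p2:
  fixes \<gamma> M :: real
  assumes "\<gamma> > real CARD('d::finite) / 2"
  shows "\<exists>C. \<forall>T \<tau> (n::nat) (u :: real \<Rightarrow> 'd fcoef).
     T > 0 \<and> 0 < \<tau> \<and> \<tau> \<le> 1 \<and> real (Suc n) * \<tau> \<le> T \<and> nls_solution T u \<and>
     (AE t in lborel. t \<in> {0<..<T} \<longrightarrow>
        in_H (\<gamma> + 2) (schr (- t) (u t)) \<and> normH (\<gamma> + 2) (schr (- t) (u t)) \<le> M)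
     \<longrightarrow> in_H \<gamma> (R4 \<tau> n (\<lambda>t. schr (- t) (u t))) \<and>
         normH \<gamma> (R4 \<tau> n (\<lambda>t. schr (- t) (u t))) \<le> C * \<tau> ^ 3"
proof -
  define c where "c = (2 * pi) powr (real CARD('d) / 2)"
  define K K2 where "K = algebra_const \<gamma> TYPE('d)" and "K2 = algebra_const (\<gamma> + 2) TYPE('d)"
  have c: "c > 0" unfolding c_def by simp
  show ?thesis
  proof (intro exI[of _ "c * (nls_step.C4 (M / c) K K2 / 3)"] allI impI, elim conjE)
    fix T \<tau> n and u :: "real \<Rightarrow> 'd fcoef"
    assume T: "T > 0" and tau: "0 < \<tau>" and step: "real (Suc n) * \<tau> \<le> T" and u: "nls_solution T u"
      and ae: "AE t in lborel. t \<in> {0<..<T} \<longrightarrow>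
        in_H (\<gamma> + 2) (schr (- t) (u t)) \<and> normH (\<gamma> + 2) (schr (- t) (u t)) \<le> M"
    have "AE t in lborel. t \<in> {0<..<T} \<longrightarrow>
        in_H (\<gamma> + 2) (schr (- t) (u t)) \<and> hnorm (\<gamma> + 2) (schr (- t) (u t)) \<le> M / c"
      using ae unfolding normH_eq_hnorm c_def[symmetric]
      by eventually_elim (use c in \<open>auto simp: field_simps\<close>)
    moreover have "continuous_on {0..T} (\<lambda>t. schr (- t) (u t) \<xi>)" for \<xi>
      by (rule continuous_on_vector_derivative) (rule has_vector_derivative_interaction[OF u])
    ultimately have "in_H (\<gamma> + 2) (schr (- t) (u t)) \<and> hnorm (\<gamma> + 2) (schr (- t) (u t)) \<le> M / c"
      if "t \<in> {0..T}" for t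
      using H_bound_of_AE_bound[OF T _ _ that, of "\<lambda>t. schr (- t) (u t)"] by blast
    then interpret nls_step \<gamma> "M / c" K K2 T \<tau> n u
      using assms tau step u by unfold_locales (auto simp: K_def K2_def)
    show "in_H \<gamma> (R4 \<tau> n (\<lambda>t. schr (- t) (u t))) \<and>
        normH \<gamma> (R4 \<tau> n (\<lambda>t. schr (- t) (u t))) \<le> c * (C4 / 3) * \<tau> ^ 3"
      using remainder_bound c unfolding R4_eq_remainder normH_eq_hnorm c_def[symmetric]
      by (simp add: mult.assoc)
  qed
qed

end
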